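(* Let $R$ and $S$ be rings, $M$ an $S$-$R$-bimodule, and $\Lambda=\begin{pmatrix} R&0\\ M&S\end{pmatrix}$. If $M\neq0$ and $\operatorname{pdim}M_R<\infty$, then $\operatorname{pdim}M_R+1\le\operatorname{fpdim}\Lambda$.
   Context: $\Lambda$ is the triangular matrix ring with matrix multiplication using the bimodule structure of $M$. The finitistic projective dimension $\operatorname{fpdim}\Lambda$ is the supremum of the projective dimensions of those finitely generated right $\Lambda$-modules that have finite projective dimension. *)

theory Defs
  imports "HOL-Algebra.Ring" "HOL-Library.Extended_Nat"
begin

record ('r, 'm) rmod =
  mcarrier :: "'m set"
  mzero :: 'm
  madd :: "'m \<Rightarrow> 'm \<Rightarrow> 'm"
  mact :: "'m \<Rightarrow> 'r \<Rightarrow> 'm"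

definition add_group :: "('r, 'm) rmod \<Rightarrow> 'm monoid" where
  "add_group M = \<lparr>carrier = mcarrier M, mult = madd M, one = mzero M\<rparr>"

definition right_module :: "('r, 'a) ring_scheme \<Rightarrow> ('r, 'm) rmod \<Rightarrow> bool" where
  "right_module R M \<longleftrightarrow> ring R \<and> comm_group (add_group M) \<and>
     (\<forall>x\<in>mcarrier M. \<forall>r\<in>carrier R. mact M x r \<in> mcarrier M) \<and>
     (\<forall>x\<in>mcarrier M. \<forall>r\<in>carrier R. \<forall>s\<in>carrier R.
        mact M x (r \<oplus>\<^bsub>R\<^esub> s) = madd M (mact M x r) (mact M x s)) \<and>
     (\<forall>x\<in>mcarrier M. \<forall>y\<in>mcarrier M. \<forall>r\<in>carrier R.
        mact M (madd M x y) r = madd M (mact M x r) (mact M y r)) \<and>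
     (\<forall>x\<in>mcarrier M. \<forall>r\<in>carrier R. \<forall>s\<in>carrier R.
        mact M x (r \<otimes>\<^bsub>R\<^esub> s) = mact M (mact M x r) s) \<and>
     (\<forall>x\<in>mcarrier M. mact M x \<one>\<^bsub>R\<^esub> = x)"

definition msum :: "('r, 'm) rmod \<Rightarrow> ('i \<Rightarrow> 'm) \<Rightarrow> 'i set \<Rightarrow> 'm" where
  "msum M f A = finprod (add_group M) f A"

definition lin_map :: "('r, 'a) ring_scheme \<Rightarrow> ('r, 'm) rmod \<Rightarrow> ('r, 'n) rmod
                        \<Rightarrow> ('m \<Rightarrow> 'n) \<Rightarrow> bool" where
  "lin_map R M N f \<longleftrightarrow> right_module R M \<and> right_module R N \<and>
     f \<in> mcarrier M \<rightarrow> mcarrier N \<and>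
     (\<forall>x\<in>mcarrier M. \<forall>y\<in>mcarrier M. f (madd M x y) = madd N (f x) (f y)) \<and>
     (\<forall>x\<in>mcarrier M. \<forall>r\<in>carrier R. f (mact M x r) = mact N (f x) r)"

definition mker :: "('r, 'm) rmod \<Rightarrow> ('r, 'n) rmod \<Rightarrow> ('m \<Rightarrow> 'n) \<Rightarrow> 'm set" where
  "mker M N f = {x \<in> mcarrier M. f x = mzero N}"

definition free_rmod :: "('r, 'a) ring_scheme \<Rightarrow> 'i set \<Rightarrow> ('r, 'i \<Rightarrow> 'r) rmod" where
  "free_rmod R I =
     \<lparr>mcarrier = {\<phi>. (\<forall>i. \<phi> i \<in> carrier R) \<and> (\<forall>i. i \<notin> I \<longrightarrow> \<phi> i = \<zero>\<^bsub>R\<^esub>)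
                     \<and> finite {i. \<phi> i \<noteq> \<zero>\<^bsub>R\<^esub>}},
      mzero = (\<lambda>i. \<zero>\<^bsub>R\<^esub>),
      madd = (\<lambda>\<phi> \<psi> i. \<phi> i \<oplus>\<^bsub>R\<^esub> \<psi> i),
      mact = (\<lambda>\<phi> r i. \<phi> i \<otimes>\<^bsub>R\<^esub> r)\<rparr>"

definition lincomb :: "('r, 'm) rmod \<Rightarrow> ('m \<Rightarrow> 'r) \<Rightarrow> 'r \<Rightarrow> 'm" where
  "lincomb P \<phi> z = msum P (\<lambda>p. mact P p (\<phi> p)) {p \<in> mcarrier P. \<phi> p \<noteq> z}"

text \<open>Projective = direct summand of a free module, i.e. the canonical epimorphism
  from the free module on the underlying set splits.\<close>
definition projective :: "('r, 'a) ring_scheme \<Rightarrow> ('r, 'm) rmod \<Rightarrow> bool" where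
  "projective R P \<longleftrightarrow> right_module R P \<and>
     (\<exists>s. lin_map R P (free_rmod R (mcarrier P)) s \<and>
          (\<forall>x\<in>mcarrier P. lincomb P (s x) \<zero>\<^bsub>R\<^esub> = x))"

text \<open>The modules \<open>P_k\<close> are taken with
  carriers in the type of finitely supported functions on \<open>'m \<times> 'r \<times> nat\<close>, which is
  large enough to contain free modules of rank \<open>max(|M|,|R|,\<aleph>\<^sub>0)\<close> and hence
  a resolution of minimal length of every module \<open>M\<close> (syzygies).\<close>
definition pdim_le :: "('r, 'a) ring_scheme \<Rightarrow> ('r, 'm) rmod \<Rightarrow> nat \<Rightarrow> bool" where
  "pdim_le R M n \<longleftrightarrow>
     (\<exists>(P :: nat \<Rightarrow> ('r, ('m \<times> 'r \<times> nat) \<Rightarrow> 'r) rmod) d \<epsilon>.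
        (\<forall>k\<le>n. projective R (P k)) \<and>
        lin_map R (P 0) M \<epsilon> \<and> \<epsilon> ` mcarrier (P 0) = mcarrier M \<and>
        (\<forall>k<n. lin_map R (P (Suc k)) (P k) (d k)) \<and>
        mker (P 0) M \<epsilon> = (if n = 0 then {mzero (P 0)} else d 0 ` mcarrier (P 1)) \<and>
        (\<forall>k<n. mker (P (Suc k)) (P k) (d k) =
                 (if Suc k < n then d (Suc k) ` mcarrier (P (Suc (Suc k)))
                  else {mzero (P (Suc k))})))"

definition pdim :: "('r, 'a) ring_scheme \<Rightarrow> ('r, 'm) rmod \<Rightarrow> enat" where
  "pdim R M = Inf {enat n | n. pdim_le R M n}"

definition fin_gen :: "('r, 'a) ring_scheme \<Rightarrow> ('r, 'm) rmod \<Rightarrow> bool" where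
  "fin_gen R M \<longleftrightarrow> right_module R M \<and>
     (\<exists>G. finite G \<and> G \<subseteq> mcarrier M \<and>
        (\<forall>x\<in>mcarrier M. \<exists>c. (\<forall>g\<in>G. c g \<in> carrier R) \<and>
                              x = msum M (\<lambda>g. mact M g (c g)) G))"

text \<open>Every finitely generated module is isomorphic
  to a quotient of some \<open>\<Lambda>^n\<close>, whose elements are sets of lists; so it suffices to
  range over modules with carrier in \<open>'l list set\<close>.\<close>
definition fpdim :: "('l, 'b) ring_scheme \<Rightarrow> enat" where
  "fpdim A = Sup {pdim A N | N :: ('l, 'l list set) rmod. fin_gen A N \<and> pdim A N < \<infinity>}"

definition bimodule :: "('s, 'b) ring_scheme \<Rightarrow> ('r, 'a) ring_scheme \<Rightarrow> ('r, 'm) rmod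
                         \<Rightarrow> ('s \<Rightarrow> 'm \<Rightarrow> 'm) \<Rightarrow> bool" where
  "bimodule S R M L \<longleftrightarrow> ring S \<and> right_module R M \<and>
     (\<forall>s\<in>carrier S. \<forall>x\<in>mcarrier M. L s x \<in> mcarrier M) \<and>
     (\<forall>s\<in>carrier S. \<forall>t\<in>carrier S. \<forall>x\<in>mcarrier M.
        L (s \<oplus>\<^bsub>S\<^esub> t) x = madd M (L s x) (L t x)) \<and>
     (\<forall>s\<in>carrier S. \<forall>x\<in>mcarrier M. \<forall>y\<in>mcarrier M.
        L s (madd M x y) = madd M (L s x) (L s y)) \<and>
     (\<forall>s\<in>carrier S. \<forall>t\<in>carrier S. \<forall>x\<in>mcarrier M.
        L (s \<otimes>\<^bsub>S\<^esub> t) x = L s (L t x)) \<and>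
     (\<forall>x\<in>mcarrier M. L \<one>\<^bsub>S\<^esub> x = x) \<and>
     (\<forall>s\<in>carrier S. \<forall>x\<in>mcarrier M. \<forall>r\<in>carrier R.
        mact M (L s x) r = L s (mact M x r))"

text \<open>\<open>\<Lambda> = [[R,0],[M,S]]\<close>; the matrix \<open>[[r,0],[m,s]]\<close> is encoded as \<open>(r,m,s)\<close>, and
  \<open>[[r,0],[m,s]]\<cdot>[[r',0],[m',s']] = [[r r',0],[m r' + s m', s s']]\<close>.\<close>
definition tri_ring :: "('r, 'a) ring_scheme \<Rightarrow> ('s, 'b) ring_scheme \<Rightarrow> ('r, 'm) rmod
                        \<Rightarrow> ('s \<Rightarrow> 'm \<Rightarrow> 'm) \<Rightarrow> ('r \<times> 'm \<times> 's) ring" where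
  "tri_ring R S M L =
     \<lparr>carrier = carrier R \<times> mcarrier M \<times> carrier S,
      mult = (\<lambda>(r, m, s) (r', m', s').
                (r \<otimes>\<^bsub>R\<^esub> r', madd M (mact M m r') (L s m'), s \<otimes>\<^bsub>S\<^esub> s')),
      one = (\<one>\<^bsub>R\<^esub>, mzero M, \<one>\<^bsub>S\<^esub>),
      zero = (\<zero>\<^bsub>R\<^esub>, mzero M, \<zero>\<^bsub>S\<^esub>),
      add = (\<lambda>(r, m, s) (r', m', s'). (r \<oplus>\<^bsub>R\<^esub> r', madd M m m', s \<oplus>\<^bsub>S\<^esub> s'))\<rparr>"

end

theory Submission
  imports Defs
begin

text \<open>Let \<open>e\<^sub>2 = (0, 0, 1) \<in> \<Lambda>\<close>. The right ideal \<open>E = e\<^sub>2\<Lambda> = 0 \<times> M \<times> S\<close> is projective,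
  and its projection onto the \<open>S\<close>-component has kernel \<open>0 \<times> M \<times> 0\<close>, which is \<open>M\<close> viewed as a
  \<open>\<Lambda>\<close>-module through \<open>\<Lambda> \<rightarrow> R\<close>. Restriction of scalars along \<open>\<Lambda> \<rightarrow> R\<close> preserves
  projectivity, so a projective resolution of \<open>M\<^sub>R\<close> of length \<open>n = pdim M\<^sub>R\<close> extends to a
  resolution of length \<open>n + 1\<close> of the cyclic \<open>\<Lambda>\<close>-module \<open>S\<close>.  Conversely, if \<open>S\<close> had a
  resolution of length \<open>k \<le> n\<close>, comparing it with this one would make the kernel at stage \<open>k\<close>
  a direct summand.  For \<open>k = 0\<close> this splits \<open>0 \<times> M \<times> 0\<close> off \<open>E\<close>, impossible because \<open>e\<^sub>2\<close>
  generates \<open>E\<close>, \<open>(0 \<times> M \<times> 0)\<^sup>2 = 0\<close> and \<open>M \<noteq> 0\<close>; for \<open>k > 0\<close> it shortens the resolution of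
  \<open>M\<close> below \<open>pdim M\<^sub>R\<close>.  Hence \<open>pdim S\<^sub>\<Lambda> = pdim M\<^sub>R + 1 \<le> fpdim \<Lambda>\<close>.\<close>

section \<open>Right modules\<close>

lemma add_group_simps [simp]:
  "carrier (add_group X) = mcarrier X" "mult (add_group X) = madd X" "one (add_group X) = mzero X"
  by (simp_all add: add_group_def)

definition mneg :: "('r, 'm) rmod \<Rightarrow> 'm \<Rightarrow> 'm" where
  "mneg X x = inv\<^bsub>add_group X\<^esub> x"

definition msub :: "('r, 'm) rmod \<Rightarrow> 'm \<Rightarrow> 'm \<Rightarrow> 'm" where
  "msub X x y = madd X x (mneg X y)"

context
  fixes A :: "('r, 'a) ring_scheme" and X :: "('r, 'm) rmod"
  assumes X: "right_module A X"
begin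

lemma right_module_ring: "ring A"
  using X by (simp add: right_module_def)

lemma right_module_add_group: "comm_group (add_group X)"
  using X by (simp add: right_module_def)

interpretation G: comm_group "add_group X" by (rule right_module_add_group)
interpretation A: ring A by (rule right_module_ring)

lemma mzero_closed [simp]: "mzero X \<in> mcarrier X"
  using G.one_closed by simp

lemma madd_closed [simp]: "x \<in> mcarrier X \<Longrightarrow> y \<in> mcarrier X \<Longrightarrow> madd X x y \<in> mcarrier X"
  using G.m_closed by simp

lemma mact_closed [simp]: "x \<in> mcarrier X \<Longrightarrow> r \<in> carrier A \<Longrightarrow> mact X x r \<in> mcarrier X"
  using X by (simp add: right_module_def)

lemma mneg_closed [simp]: "x \<in> mcarrier X \<Longrightarrow> mneg X x \<in> mcarrier X"
  unfolding mneg_def using G.inv_closed by simp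

lemma msub_closed [simp]: "x \<in> mcarrier X \<Longrightarrow> y \<in> mcarrier X \<Longrightarrow> msub X x y \<in> mcarrier X"
  by (simp add: msub_def)

lemma madd_comm: "x \<in> mcarrier X \<Longrightarrow> y \<in> mcarrier X \<Longrightarrow> madd X x y = madd X y x"
  using G.m_comm by simp

lemma madd_assoc:
  "x \<in> mcarrier X \<Longrightarrow> y \<in> mcarrier X \<Longrightarrow> z \<in> mcarrier X \<Longrightarrow>
   madd X (madd X x y) z = madd X x (madd X y z)"
  using G.m_assoc by simp

lemma madd_lcomm:
  "x \<in> mcarrier X \<Longrightarrow> y \<in> mcarrier X \<Longrightarrow> z \<in> mcarrier X \<Longrightarrow>
   madd X x (madd X y z) = madd X y (madd X x z)"
  using G.m_lcomm by simp

lemma madd_swap: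
  "a \<in> mcarrier X \<Longrightarrow> b \<in> mcarrier X \<Longrightarrow> c \<in> mcarrier X \<Longrightarrow> x \<in> mcarrier X \<Longrightarrow>
   madd X (madd X a b) (madd X c x) = madd X (madd X a c) (madd X b x)"
  by (simp add: madd_assoc madd_lcomm[of b c x])

lemma madd_zero_left [simp]: "x \<in> mcarrier X \<Longrightarrow> madd X (mzero X) x = x"
  using G.l_one by simp

lemma madd_zero_right [simp]: "x \<in> mcarrier X \<Longrightarrow> madd X x (mzero X) = x"
  using G.r_one by simp

lemma madd_mneg_left [simp]: "x \<in> mcarrier X \<Longrightarrow> madd X (mneg X x) x = mzero X"
  unfolding mneg_def using G.l_inv by simp

lemma madd_mneg_right [simp]: "x \<in> mcarrier X \<Longrightarrow> madd X x (mneg X x) = mzero X"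
  unfolding mneg_def using G.r_inv by simp

lemma mneg_unique:
  "x \<in> mcarrier X \<Longrightarrow> y \<in> mcarrier X \<Longrightarrow> madd X x y = mzero X \<Longrightarrow> x = mneg X y"
  unfolding mneg_def using G.inv_equality[of x y] by simp

lemma madd_self_eq_iff: "x \<in> mcarrier X \<Longrightarrow> x = madd X x x \<longleftrightarrow> x = mzero X"
  using G.l_cancel_one'[of x x] by simp

lemma mneg_madd:
  "x \<in> mcarrier X \<Longrightarrow> y \<in> mcarrier X \<Longrightarrow> mneg X (madd X x y) = madd X (mneg X x) (mneg X y)"
  unfolding mneg_def using G.inv_mult by (simp add: G.m_comm)

lemma msub_self [simp]: "x \<in> mcarrier X \<Longrightarrow> msub X x x = mzero X"
  by (simp add: msub_def)

lemma msub_zero [simp]: "x \<in> mcarrier X \<Longrightarrow> msub X x (mzero X) = x"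
  unfolding msub_def mneg_def using G.inv_one by simp

lemma mact_r_distr:
  "x \<in> mcarrier X \<Longrightarrow> r \<in> carrier A \<Longrightarrow> s \<in> carrier A \<Longrightarrow>
   mact X x (r \<oplus>\<^bsub>A\<^esub> s) = madd X (mact X x r) (mact X x s)"
  using X by (simp add: right_module_def)

lemma mact_l_distr:
  "x \<in> mcarrier X \<Longrightarrow> y \<in> mcarrier X \<Longrightarrow> r \<in> carrier A \<Longrightarrow>
   mact X (madd X x y) r = madd X (mact X x r) (mact X y r)"
  using X by (simp add: right_module_def)

lemma mact_assoc:
  "x \<in> mcarrier X \<Longrightarrow> r \<in> carrier A \<Longrightarrow> s \<in> carrier A \<Longrightarrow>
   mact X x (r \<otimes>\<^bsub>A\<^esub> s) = mact X (mact X x r) s"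
  using X by (simp add: right_module_def)

lemma mact_one [simp]: "x \<in> mcarrier X \<Longrightarrow> mact X x \<one>\<^bsub>A\<^esub> = x"
  using X by (simp add: right_module_def)

lemma mact_zero [simp]: "x \<in> mcarrier X \<Longrightarrow> mact X x \<zero>\<^bsub>A\<^esub> = mzero X"
  using mact_r_distr[of x "\<zero>\<^bsub>A\<^esub>" "\<zero>\<^bsub>A\<^esub>"] madd_self_eq_iff[of "mact X x \<zero>\<^bsub>A\<^esub>"] by simp

lemma mzero_mact [simp]: "r \<in> carrier A \<Longrightarrow> mact X (mzero X) r = mzero X"
  using mact_l_distr[of "mzero X" "mzero X" r] madd_self_eq_iff[of "mact X (mzero X) r"] by simp

lemma mneg_mact: "x \<in> mcarrier X \<Longrightarrow> r \<in> carrier A \<Longrightarrow> mact X (mneg X x) r = mneg X (mact X x r)"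
  using mact_l_distr[of "mneg X x" x r] by (simp add: mneg_unique)

lemma msub_mact:
  "x \<in> mcarrier X \<Longrightarrow> y \<in> mcarrier X \<Longrightarrow> r \<in> carrier A \<Longrightarrow>
   mact X (msub X x y) r = msub X (mact X x r) (mact X y r)"
  by (simp add: msub_def mact_l_distr mneg_mact)

lemma mact_neg_one: "x \<in> mcarrier X \<Longrightarrow> mact X x (\<ominus>\<^bsub>A\<^esub> \<one>\<^bsub>A\<^esub>) = mneg X x"
  using mact_r_distr[of x "\<ominus>\<^bsub>A\<^esub> \<one>\<^bsub>A\<^esub>" "\<one>\<^bsub>A\<^esub>"] by (simp add: A.l_neg mneg_unique)

end

lemma lin_mapD:
  assumes "lin_map A X Y f"
  shows "right_module A X" "right_module A Y"
    "\<And>x. x \<in> mcarrier X \<Longrightarrow> f x \<in> mcarrier Y"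
    "\<And>x y. x \<in> mcarrier X \<Longrightarrow> y \<in> mcarrier X \<Longrightarrow> f (madd X x y) = madd Y (f x) (f y)"
    "\<And>x r. x \<in> mcarrier X \<Longrightarrow> r \<in> carrier A \<Longrightarrow> f (mact X x r) = mact Y (f x) r"
  using assms by (auto simp: lin_map_def)

lemma lin_mapI:
  assumes "right_module A X" "right_module A Y"
    "\<And>x. x \<in> mcarrier X \<Longrightarrow> f x \<in> mcarrier Y"
    "\<And>x y. x \<in> mcarrier X \<Longrightarrow> y \<in> mcarrier X \<Longrightarrow> f (madd X x y) = madd Y (f x) (f y)"
    "\<And>x r. x \<in> mcarrier X \<Longrightarrow> r \<in> carrier A \<Longrightarrow> f (mact X x r) = mact Y (f x) r"
  shows "lin_map A X Y f"
  using assms by (auto simp: lin_map_def)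

lemma lin_map_zero:
  assumes f: "lin_map A X Y f"
  shows "f (mzero X) = mzero Y"
proof -
  note f = lin_mapD[OF f]
  have "f (mzero X) = madd Y (f (mzero X)) (f (mzero X))"
    using f(1) f(4)[of "mzero X" "mzero X"] by simp
  then show ?thesis
    using f(1,2,3) madd_self_eq_iff[OF f(2), of "f (mzero X)"] by simp
qed

lemma lin_map_msub:
  assumes f: "lin_map A X Y f" and x: "x \<in> mcarrier X" and y: "y \<in> mcarrier X"
  shows "f (msub X x y) = msub Y (f x) (f y)"
proof -
  note f = lin_mapD[OF f]
  have "madd Y (f (mneg X y)) (f y) = mzero Y"
    using f y by (simp add: f(4)[symmetric] lin_map_zero[OF assms(1)])
  then have "f (mneg X y) = mneg Y (f y)"
    using f y by (simp add: mneg_unique)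
  then show ?thesis
    using f x y by (simp add: msub_def)
qed

lemma lin_map_compose:
  "lin_map A X Y f \<Longrightarrow> lin_map A Y Z g \<Longrightarrow> lin_map A X Z (\<lambda>x. g (f x))"
  using lin_mapD[of A X Y f] lin_mapD[of A Y Z g] by (intro lin_mapI) auto

lemma lin_map_id: "right_module A X \<Longrightarrow> lin_map A X X (\<lambda>x. x)"
  by (intro lin_mapI) auto

lemma lin_map_diff:
  assumes f: "lin_map A X Y f" and g: "lin_map A X Y g"
  shows "lin_map A X Y (\<lambda>x. msub Y (f x) (g x))"
proof -
  note f = lin_mapD[OF f] and g = lin_mapD[OF g]
  show ?thesis
  proof (rule lin_mapI)
    fix x y
    assume "x \<in> mcarrier X" "y \<in> mcarrier X"
    then show "msub Y (f (madd X x y)) (g (madd X x y)) =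
               madd Y (msub Y (f x) (g x)) (msub Y (f y) (g y))"
      using f g by (simp add: msub_def mneg_madd[OF f(2)] madd_assoc[OF f(2)] madd_lcomm[OF f(2)])
  qed (use f g in \<open>auto simp: msub_mact\<close>)
qed

context
  fixes A :: "('r, 'a) ring_scheme" and X :: "('r, 'm) rmod"
  assumes X: "right_module A X"
begin

interpretation G: comm_group "add_group X" by (rule right_module_add_group[OF X])

lemmas [simp] = mzero_closed[OF X] madd_closed[OF X] mact_closed[OF X]
  madd_zero_left[OF X] madd_zero_right[OF X] mact_zero[OF X] mzero_mact[OF X]

lemma msum_closed [simp]: "(\<And>i. i \<in> F \<Longrightarrow> f i \<in> mcarrier X) \<Longrightarrow> msum X f F \<in> mcarrier X"
  unfolding msum_def using G.finprod_closed[of f F] by auto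

lemma msum_empty [simp]: "msum X f {} = mzero X"
  unfolding msum_def by simp

lemma msum_insert:
  "finite F \<Longrightarrow> a \<notin> F \<Longrightarrow> (\<And>i. i \<in> insert a F \<Longrightarrow> f i \<in> mcarrier X) \<Longrightarrow>
   msum X f (insert a F) = madd X (f a) (msum X f F)"
  unfolding msum_def using G.finprod_insert[of F a f] by auto

lemma msum_singleton: "f a \<in> mcarrier X \<Longrightarrow> msum X f {a} = f a"
  using msum_insert[of "{}" a f] by simp

lemma msum_cong:
  "F = F' \<Longrightarrow> (\<And>i. i \<in> F' \<Longrightarrow> g i \<in> mcarrier X) \<Longrightarrow> (\<And>i. i \<in> F' \<Longrightarrow> f i = g i) \<Longrightarrow>
   msum X f F = msum X g F'"
  unfolding msum_def by (rule G.finprod_cong') auto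

lemma msum_mono_neutral:
  "finite F' \<Longrightarrow> F \<subseteq> F' \<Longrightarrow> (\<And>i. i \<in> F' - F \<Longrightarrow> f i = mzero X) \<Longrightarrow>
   (\<And>i. i \<in> F' \<Longrightarrow> f i \<in> mcarrier X) \<Longrightarrow> msum X f F = msum X f F'"
  unfolding msum_def by (rule G.finprod_mono_neutral_cong_left) auto

lemma msum_madd:
  "(\<And>i. i \<in> F \<Longrightarrow> f i \<in> mcarrier X) \<Longrightarrow> (\<And>i. i \<in> F \<Longrightarrow> g i \<in> mcarrier X) \<Longrightarrow>
   msum X (\<lambda>i. madd X (f i) (g i)) F = madd X (msum X f F) (msum X g F)"
  unfolding msum_def using G.finprod_multf[of f F g] by auto

lemma msum_mact:
  assumes a: "a \<in> carrier A" and f: "\<And>i. i \<in> F \<Longrightarrow> f i \<in> mcarrier X"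
  shows "mact X (msum X f F) a = msum X (\<lambda>i. mact X (f i) a) F"
  using f
proof (induct F rule: infinite_finite_induct)
  case (infinite F)
  then show ?case using a by (simp add: msum_def)
next
  case empty
  then show ?case using a by simp
next
  case (insert x F)
  have "msum X f (insert x F) = madd X (f x) (msum X f F)"
    by (rule msum_insert) (use insert in auto)
  moreover have "msum X (\<lambda>i. mact X (f i) a) (insert x F) =
      madd X (mact X (f x) a) (msum X (\<lambda>i. mact X (f i) a) F)"
    by (rule msum_insert) (use insert a in auto)
  ultimately show ?case
    using insert a by (simp add: mact_l_distr[OF X])
qed

end

lemma lin_map_msum:
  assumes h: "lin_map A X Y h" and f: "\<And>i. i \<in> F \<Longrightarrow> f i \<in> mcarrier X"
  shows "h (msum X f F) = msum Y (\<lambda>i. h (f i)) F"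
  using f
proof (induct F rule: infinite_finite_induct)
  case (infinite F)
  then show ?case using lin_map_zero[OF h] by (simp add: msum_def finprod_def)
next
  case empty
  then show ?case using lin_map_zero[OF h] lin_mapD[OF h] by simp
next
  case (insert x F)
  note h = lin_mapD[OF h]
  have "msum X f (insert x F) = madd X (f x) (msum X f F)"
    by (rule msum_insert[OF h(1)]) (use insert in auto)
  moreover have "msum Y (\<lambda>i. h (f i)) (insert x F) = madd Y (h (f x)) (msum Y (\<lambda>i. h (f i)) F)"
    by (rule msum_insert[OF h(2)]) (use insert h in auto)
  ultimately show ?case
    using insert h by simp
qed

lemma right_module_restrict:
  assumes X: "right_module A X" and C: "C \<subseteq> mcarrier X" "mzero X \<in> C"
    "\<And>x y. x \<in> C \<Longrightarrow> y \<in> C \<Longrightarrow> madd X x y \<in> C"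
    "\<And>x r. x \<in> C \<Longrightarrow> r \<in> carrier A \<Longrightarrow> mact X x r \<in> C"
  shows "right_module A (X\<lparr>mcarrier := C\<rparr>)"
proof -
  interpret A: ring A by (rule right_module_ring[OF X])
  have inC: "x \<in> mcarrier X" if "x \<in> C" for x
    using that C(1) by auto
  have mneg_in: "mneg X x \<in> C" if "x \<in> C" for x
    using C(4)[OF that, of "\<ominus>\<^bsub>A\<^esub> \<one>\<^bsub>A\<^esub>"] mact_neg_one[OF X inC[OF that]] by simp
  have "comm_group (add_group (X\<lparr>mcarrier := C\<rparr>))"
  proof (rule comm_groupI, goal_cases)
    case 3
    then show ?case using C by (auto simp: madd_assoc[OF X inC inC inC])
  next
    case 4
    then show ?case using C by (auto simp: madd_comm[OF X inC inC])
  next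
    case (6 x)
    then show ?case
      using X mneg_in inC by (intro bexI[of _ "mneg X x"]) auto
  qed (use C X inC in auto)
  then show ?thesis
    using X C inC unfolding right_module_def[of A "X\<lparr>mcarrier := C\<rparr>"]
    by (auto simp: right_module_ring mact_r_distr mact_l_distr mact_assoc)
qed

lemma lin_map_restrict:
  assumes f: "lin_map A X Y f" and XC: "right_module A (X\<lparr>mcarrier := C\<rparr>)" and C: "C \<subseteq> mcarrier X"
  shows "lin_map A (X\<lparr>mcarrier := C\<rparr>) Y f"
  using lin_mapD[OF f] XC C by (intro lin_mapI) (auto simp: subset_iff)

lemma msum_restrict:
  assumes X: "right_module A X" and XC: "right_module A (X\<lparr>mcarrier := C\<rparr>)"
    and f: "\<And>i. i \<in> F \<Longrightarrow> f i \<in> C" and C: "C \<subseteq> mcarrier X"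
  shows "msum (X\<lparr>mcarrier := C\<rparr>) f F = msum X f F"
  using f
proof (induct F rule: infinite_finite_induct)
  case (infinite F)
  then show ?case by (simp add: msum_def finprod_def)
next
  case empty
  then show ?case using X XC by simp
next
  case (insert x F)
  have "msum X f (insert x F) = madd X (f x) (msum X f F)"
    by (rule msum_insert[OF X]) (use insert C in auto)
  moreover have "msum (X\<lparr>mcarrier := C\<rparr>) f (insert x F) =
      madd X (f x) (msum (X\<lparr>mcarrier := C\<rparr>) f F)"
    by (rule msum_insert[OF XC, simplified]) (use insert in auto)
  ultimately show ?case
    using insert by simp
qed

definition regular_rmod :: "('r, 'a) ring_scheme \<Rightarrow> ('r, 'r) rmod" where
  "regular_rmod A = \<lparr>mcarrier = carrier A, mzero = \<zero>\<^bsub>A\<^esub>, madd = add A, mact = mult A\<rparr>"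

lemma comm_group_add_of_ring:
  assumes "ring A"
  shows "comm_group \<lparr>carrier = carrier A, mult = add A, one = \<zero>\<^bsub>A\<^esub>\<rparr>"
proof -
  interpret A: ring A by (rule assms)
  show ?thesis
  proof (rule comm_groupI, goal_cases)
    case (6 x)
    then show ?case by (intro bexI[of _ "\<ominus>\<^bsub>A\<^esub> x"]) (auto simp: A.l_neg)
  qed (auto simp: A.a_ac)
qed

lemma right_module_regular_rmod:
  assumes "ring A"
  shows "right_module A (regular_rmod A)"
proof -
  interpret A: ring A by (rule assms)
  have "add_group (regular_rmod A) = \<lparr>carrier = carrier A, mult = add A, one = \<zero>\<^bsub>A\<^esub>\<rparr>"
    by (simp add: add_group_def regular_rmod_def)
  then have "comm_group (add_group (regular_rmod A))"
    using comm_group_add_of_ring[OF assms] by simp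
  then show ?thesis
    unfolding right_module_def by (simp add: regular_rmod_def assms A.r_distr A.l_distr A.m_assoc)
qed

section \<open>Free modules, dual bases and projectivity\<close>

lemma free_rmod_simps [simp]:
  "mcarrier (free_rmod A I) = {\<phi>. (\<forall>i. \<phi> i \<in> carrier A) \<and> (\<forall>i. i \<notin> I \<longrightarrow> \<phi> i = \<zero>\<^bsub>A\<^esub>)
                                 \<and> finite {i. \<phi> i \<noteq> \<zero>\<^bsub>A\<^esub>}}"
  "mzero (free_rmod A I) = (\<lambda>i. \<zero>\<^bsub>A\<^esub>)"
  "madd (free_rmod A I) = (\<lambda>\<phi> \<psi> i. \<phi> i \<oplus>\<^bsub>A\<^esub> \<psi> i)"
  "mact (free_rmod A I) = (\<lambda>\<phi> r i. \<phi> i \<otimes>\<^bsub>A\<^esub> r)"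
  by (simp_all add: free_rmod_def)

lemma right_module_free_rmod:
  assumes "ring A"
  shows "right_module A (free_rmod A I)"
proof -
  interpret A: ring A by (rule assms)
  have "comm_group (add_group (free_rmod A I))"
  proof (rule comm_groupI, goal_cases)
    case (1 \<phi> \<psi>)
    then have "{i. \<phi> i \<oplus>\<^bsub>A\<^esub> \<psi> i \<noteq> \<zero>\<^bsub>A\<^esub>} \<subseteq> {i. \<phi> i \<noteq> \<zero>\<^bsub>A\<^esub>} \<union> {i. \<psi> i \<noteq> \<zero>\<^bsub>A\<^esub>}"
      by auto
    with 1 show ?case by (auto intro: finite_subset)
  next
    case (6 \<phi>)
    then have "{i. \<ominus>\<^bsub>A\<^esub> \<phi> i \<noteq> \<zero>\<^bsub>A\<^esub>} \<subseteq> {i. \<phi> i \<noteq> \<zero>\<^bsub>A\<^esub>}"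
      by auto
    with 6 show ?case
      by (intro bexI[of _ "\<lambda>i. \<ominus>\<^bsub>A\<^esub> \<phi> i"]) (auto intro: finite_subset simp: A.l_neg)
  qed (auto simp: A.a_ac)
  moreover have "finite {i. \<phi> i \<otimes>\<^bsub>A\<^esub> r \<noteq> \<zero>\<^bsub>A\<^esub>}"
    if "finite {i. \<phi> i \<noteq> \<zero>\<^bsub>A\<^esub>}" "r \<in> carrier A" for \<phi> r
    by (rule finite_subset[OF _ that(1)]) (use that in auto)
  ultimately show ?thesis
    unfolding right_module_def by (auto simp: assms A.r_distr A.l_distr A.m_assoc)
qed

definition free_unit :: "('r, 'a) ring_scheme \<Rightarrow> 'i \<Rightarrow> 'i \<Rightarrow> 'r" where
  "free_unit A p = (\<lambda>q. if q = p then \<one>\<^bsub>A\<^esub> else \<zero>\<^bsub>A\<^esub>)"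

lemma free_unit_closed:
  assumes "ring A" and "p \<in> I"
  shows "free_unit A p \<in> mcarrier (free_rmod A I)"
proof -
  have "{q. free_unit A p q \<noteq> \<zero>\<^bsub>A\<^esub>} \<subseteq> {p}"
    by (auto simp: free_unit_def)
  then show ?thesis
    using assms by (auto simp: free_unit_def ring.ring_simprules intro: finite_subset)
qed

context
  fixes A :: "('r, 'a) ring_scheme" and X :: "('r, 'm) rmod"
  assumes X: "right_module A X"
begin

interpretation A: ring A by (rule right_module_ring[OF X])

lemmas [simp] = mzero_closed[OF X] madd_closed[OF X] mact_closed[OF X]
  madd_zero_left[OF X] madd_zero_right[OF X] mact_zero[OF X] mzero_mact[OF X] mact_one[OF X]

lemma lincomb_eq_msum:
  assumes \<phi>: "\<phi> \<in> mcarrier (free_rmod A (mcarrier X))"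
    and U: "finite U" "{p \<in> mcarrier X. \<phi> p \<noteq> \<zero>\<^bsub>A\<^esub>} \<subseteq> U" "U \<subseteq> mcarrier X"
  shows "lincomb X \<phi> \<zero>\<^bsub>A\<^esub> = msum X (\<lambda>p. mact X p (\<phi> p)) U"
  unfolding lincomb_def by (rule msum_mono_neutral[OF X U(1,2)]) (use \<phi> U in auto)

lemma lin_map_lincomb: "lin_map A (free_rmod A (mcarrier X)) X (\<lambda>\<phi>. lincomb X \<phi> \<zero>\<^bsub>A\<^esub>)"
proof -
  let ?F = "free_rmod A (mcarrier X)"
  let ?supp = "\<lambda>\<phi>. {p \<in> mcarrier X. \<phi> p \<noteq> \<zero>\<^bsub>A\<^esub>}"
  have F: "right_module A ?F"
    by (rule right_module_free_rmod[OF A.ring_axioms])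
  have fin: "finite (?supp \<phi>)" if "\<phi> \<in> mcarrier ?F" for \<phi>
    using that by (auto intro: finite_subset)
  show ?thesis
  proof (rule lin_mapI[OF F X])
    fix \<phi> assume "\<phi> \<in> mcarrier ?F"
    then show "lincomb X \<phi> \<zero>\<^bsub>A\<^esub> \<in> mcarrier X"
      by (auto simp: lincomb_def intro!: msum_closed[OF X])
  next
    fix \<phi> \<psi> assume \<phi>: "\<phi> \<in> mcarrier ?F" and \<psi>: "\<psi> \<in> mcarrier ?F"
    let ?U = "?supp \<phi> \<union> ?supp \<psi>"
    have U: "finite ?U" "?U \<subseteq> mcarrier X"
      using fin[OF \<phi>] fin[OF \<psi>] by auto
    have "lincomb X (madd ?F \<phi> \<psi>) \<zero>\<^bsub>A\<^esub> = msum X (\<lambda>p. mact X p (madd ?F \<phi> \<psi> p)) ?U"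
      by (rule lincomb_eq_msum[OF madd_closed[OF F \<phi> \<psi>] U(1) _ U(2)]) (use \<phi> \<psi> in auto)
    also have "\<dots> = msum X (\<lambda>p. madd X (mact X p (\<phi> p)) (mact X p (\<psi> p))) ?U"
      by (rule msum_cong[OF X refl]) (use \<phi> \<psi> U in \<open>auto simp: mact_r_distr[OF X]\<close>)
    also have "\<dots> = madd X (msum X (\<lambda>p. mact X p (\<phi> p)) ?U) (msum X (\<lambda>p. mact X p (\<psi> p)) ?U)"
      by (rule msum_madd[OF X]) (use \<phi> \<psi> U in auto)
    also have "\<dots> = madd X (lincomb X \<phi> \<zero>\<^bsub>A\<^esub>) (lincomb X \<psi> \<zero>\<^bsub>A\<^esub>)"
      using lincomb_eq_msum[OF \<phi> U(1) _ U(2)] lincomb_eq_msum[OF \<psi> U(1) _ U(2)] by auto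
    finally show "lincomb X (madd ?F \<phi> \<psi>) \<zero>\<^bsub>A\<^esub> = madd X (lincomb X \<phi> \<zero>\<^bsub>A\<^esub>) (lincomb X \<psi> \<zero>\<^bsub>A\<^esub>)" .
  next
    fix \<phi> r assume \<phi>: "\<phi> \<in> mcarrier ?F" and r: "r \<in> carrier A"
    have "lincomb X (mact ?F \<phi> r) \<zero>\<^bsub>A\<^esub> = msum X (\<lambda>p. mact X p (mact ?F \<phi> r p)) (?supp \<phi>)"
      by (rule lincomb_eq_msum[OF mact_closed[OF F \<phi> r] fin[OF \<phi>]]) (use \<phi> r in auto)
    also have "\<dots> = msum X (\<lambda>p. mact X (mact X p (\<phi> p)) r) (?supp \<phi>)"
      by (rule msum_cong[OF X refl]) (use \<phi> r in \<open>auto simp: mact_assoc[OF X]\<close>)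
    also have "\<dots> = mact X (lincomb X \<phi> \<zero>\<^bsub>A\<^esub>) r"
      unfolding lincomb_def by (rule msum_mact[OF X, symmetric]) (use \<phi> r in auto)
    finally show "lincomb X (mact ?F \<phi> r) \<zero>\<^bsub>A\<^esub> = mact X (lincomb X \<phi> \<zero>\<^bsub>A\<^esub>) r" .
  qed
qed

lemma lincomb_free_unit:
  assumes "p \<in> mcarrier X"
  shows "lincomb X (free_unit A p) \<zero>\<^bsub>A\<^esub> = p"
proof -
  have "lincomb X (free_unit A p) \<zero>\<^bsub>A\<^esub> = msum X (\<lambda>q. mact X q (free_unit A p q)) {p}"
    by (rule lincomb_eq_msum) (use assms free_unit_closed[OF A.ring_axioms] in \<open>auto simp: free_unit_def\<close>)
  then show ?thesis
    using assms by (simp add: msum_singleton[OF X] free_unit_def)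
qed

end

text \<open>The family \<open>b\<close> need not be free: by the dual basis lemma, a module has a dual basis
  iff it is projective.\<close>

definition dual_basis :: "('r, 'a) ring_scheme \<Rightarrow> ('r, 'm) rmod \<Rightarrow> 'i set \<Rightarrow> ('i \<Rightarrow> 'm)
                          \<Rightarrow> ('i \<Rightarrow> 'm \<Rightarrow> 'r) \<Rightarrow> bool" where
  "dual_basis A X I b \<phi> \<longleftrightarrow> (\<forall>i\<in>I. b i \<in> mcarrier X) \<and>
     (\<forall>i\<in>I. \<forall>v\<in>mcarrier X. \<phi> i v \<in> carrier A) \<and>
     (\<forall>i\<in>I. \<forall>v\<in>mcarrier X. \<forall>w\<in>mcarrier X. \<phi> i (madd X v w) = \<phi> i v \<oplus>\<^bsub>A\<^esub> \<phi> i w) \<and>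
     (\<forall>i\<in>I. \<forall>v\<in>mcarrier X. \<forall>a\<in>carrier A. \<phi> i (mact X v a) = \<phi> i v \<otimes>\<^bsub>A\<^esub> a) \<and>
     (\<forall>v\<in>mcarrier X. \<exists>F. finite F \<and> F \<subseteq> I \<and> (\<forall>i\<in>I - F. \<phi> i v = \<zero>\<^bsub>A\<^esub>) \<and>
        v = msum X (\<lambda>i. mact X (b i) (\<phi> i v)) F)"

context
  fixes A :: "('r, 'a) ring_scheme" and X :: "('r, 'm) rmod" and I :: "'i set"
    and b :: "'i \<Rightarrow> 'm" and \<phi> :: "'i \<Rightarrow> 'm \<Rightarrow> 'r"
  assumes X: "right_module A X" and db: "dual_basis A X I b \<phi>"
begin

interpretation A: ring A by (rule right_module_ring[OF X])

lemma dual_basis_closed: "i \<in> I \<Longrightarrow> b i \<in> mcarrier X"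
  using db by (simp add: dual_basis_def)

lemma dual_basis_coord_closed: "i \<in> I \<Longrightarrow> v \<in> mcarrier X \<Longrightarrow> \<phi> i v \<in> carrier A"
  using db by (simp add: dual_basis_def)

lemma dual_basis_coord_madd:
  "i \<in> I \<Longrightarrow> v \<in> mcarrier X \<Longrightarrow> w \<in> mcarrier X \<Longrightarrow> \<phi> i (madd X v w) = \<phi> i v \<oplus>\<^bsub>A\<^esub> \<phi> i w"
  using db by (simp add: dual_basis_def)

lemma dual_basis_coord_mact:
  "i \<in> I \<Longrightarrow> v \<in> mcarrier X \<Longrightarrow> a \<in> carrier A \<Longrightarrow> \<phi> i (mact X v a) = \<phi> i v \<otimes>\<^bsub>A\<^esub> a"
  using db by (simp add: dual_basis_def)

definition dual_support :: "'m \<Rightarrow> 'i set" where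
  "dual_support v = {i \<in> I. \<phi> i v \<noteq> \<zero>\<^bsub>A\<^esub>}"

definition dual_extend :: "('r, 'n) rmod \<Rightarrow> ('i \<Rightarrow> 'n) \<Rightarrow> 'm \<Rightarrow> 'n" where
  "dual_extend B g v = msum B (\<lambda>i. mact B (g i) (\<phi> i v)) (dual_support v)"

lemma dual_basis_expansion:
  assumes v: "v \<in> mcarrier X"
  shows "finite (dual_support v)" "v = msum X (\<lambda>i. mact X (b i) (\<phi> i v)) (dual_support v)"
proof -
  obtain F where F: "finite F" "F \<subseteq> I" "\<forall>i\<in>I - F. \<phi> i v = \<zero>\<^bsub>A\<^esub>"
    "v = msum X (\<lambda>i. mact X (b i) (\<phi> i v)) F"
    using db v unfolding dual_basis_def by blast
  have sub: "dual_support v \<subseteq> F"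
    using F by (auto simp: dual_support_def)
  then show "finite (dual_support v)"
    using F finite_subset by blast
  have "msum X (\<lambda>i. mact X (b i) (\<phi> i v)) (dual_support v) = msum X (\<lambda>i. mact X (b i) (\<phi> i v)) F"
    by (rule msum_mono_neutral[OF X F(1) sub])
      (use F v X in \<open>auto simp: dual_support_def dual_basis_closed dual_basis_coord_closed\<close>)
  then show "v = msum X (\<lambda>i. mact X (b i) (\<phi> i v)) (dual_support v)"
    using F by simp
qed

lemma dual_extend_eq_msum:
  assumes B: "right_module A B" and g: "\<And>i. i \<in> I \<Longrightarrow> g i \<in> mcarrier B"
    and v: "v \<in> mcarrier X" and U: "finite U" "dual_support v \<subseteq> U" "U \<subseteq> I"
  shows "dual_extend B g v = msum B (\<lambda>i. mact B (g i) (\<phi> i v)) U"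
  unfolding dual_extend_def
  by (rule msum_mono_neutral[OF B U(1,2)])
    (use U v g B in \<open>auto simp: dual_support_def dual_basis_coord_closed\<close>)

lemma lin_map_dual_extend:
  assumes B: "right_module A B" and g: "\<And>i. i \<in> I \<Longrightarrow> g i \<in> mcarrier B"
  shows "lin_map A X B (dual_extend B g)"
proof (rule lin_mapI[OF X B])
  have supp: "finite (dual_support v)" "dual_support v \<subseteq> I" if "v \<in> mcarrier X" for v
    using dual_basis_expansion(1)[OF that] by (auto simp: dual_support_def)
  note coord = dual_basis_coord_closed dual_basis_coord_madd dual_basis_coord_mact
  {
    fix v assume "v \<in> mcarrier X"
    then show "dual_extend B g v \<in> mcarrier B"
      unfolding dual_extend_def using B g supp
      by (auto simp: coord dual_support_def intro!: msum_closed mact_closed[OF B])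
  next
    fix v w assume v: "v \<in> mcarrier X" and w: "w \<in> mcarrier X"
    let ?U = "dual_support v \<union> dual_support w"
    have U: "finite ?U" "?U \<subseteq> I"
      using supp v w by auto
    have "dual_support (madd X v w) \<subseteq> ?U"
      using v w by (auto simp: dual_support_def coord)
    then have "dual_extend B g (madd X v w) = msum B (\<lambda>i. mact B (g i) (\<phi> i (madd X v w))) ?U"
      by (intro dual_extend_eq_msum[OF B g]) (use v w X U in auto)
    also have "\<dots> = msum B (\<lambda>i. madd B (mact B (g i) (\<phi> i v)) (mact B (g i) (\<phi> i w))) ?U"
      by (rule msum_cong[OF B refl]) (use v w U g B in \<open>auto simp: coord mact_r_distr\<close>)
    also have "\<dots> = madd B (msum B (\<lambda>i. mact B (g i) (\<phi> i v)) ?U) (msum B (\<lambda>i. mact B (g i) (\<phi> i w)) ?U)"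
      by (rule msum_madd[OF B]) (use v w U g B in \<open>auto simp: coord\<close>)
    also have "\<dots> = madd B (dual_extend B g v) (dual_extend B g w)"
      using dual_extend_eq_msum[OF B g v U(1) _ U(2)] dual_extend_eq_msum[OF B g w U(1) _ U(2)] by auto
    finally show "dual_extend B g (madd X v w) = madd B (dual_extend B g v) (dual_extend B g w)" .
  next
    fix v a assume v: "v \<in> mcarrier X" and a: "a \<in> carrier A"
    have "dual_support (mact X v a) \<subseteq> dual_support v"
      using v a by (auto simp: dual_support_def coord)
    then have "dual_extend B g (mact X v a) = msum B (\<lambda>i. mact B (g i) (\<phi> i (mact X v a))) (dual_support v)"
      by (intro dual_extend_eq_msum[OF B g]) (use v a X supp in auto)
    also have "\<dots> = msum B (\<lambda>i. mact B (mact B (g i) (\<phi> i v)) a) (dual_support v)"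
      by (rule msum_cong[OF B refl])
        (use v a g in \<open>auto simp: dual_support_def coord mact_assoc[OF B] mact_closed[OF B]\<close>)
    also have "\<dots> = mact B (dual_extend B g v) a"
      unfolding dual_extend_def
      by (rule msum_mact[OF B, symmetric]) (use v a g in \<open>auto simp: dual_support_def coord mact_closed[OF B]\<close>)
    finally show "dual_extend B g (mact X v a) = mact B (dual_extend B g v) a" .
  }
qed

lemma lin_map_dual_extend_comp:
  assumes f: "lin_map A B C f" and g: "\<And>i. i \<in> I \<Longrightarrow> g i \<in> mcarrier B" and v: "v \<in> mcarrier X"
  shows "f (dual_extend B g v) = dual_extend C (\<lambda>i. f (g i)) v"
proof -
  note f = lin_mapD[OF f]
  have supp: "dual_support v \<subseteq> I"
    by (auto simp: dual_support_def)
  have "f (dual_extend B g v) = msum C (\<lambda>i. f (mact B (g i) (\<phi> i v))) (dual_support v)"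
    unfolding dual_extend_def by (rule lin_map_msum[OF assms(1)])
      (use g v supp f in \<open>auto simp: dual_basis_coord_closed\<close>)
  also have "\<dots> = dual_extend C (\<lambda>i. f (g i)) v"
    unfolding dual_extend_def by (rule msum_cong[OF f(2) refl])
      (use g v supp f in \<open>auto simp: dual_basis_coord_closed\<close>)
  finally show ?thesis .
qed

lemma dual_extend_cong:
  assumes B: "right_module A B" and g': "\<And>i. i \<in> I \<Longrightarrow> g' i \<in> mcarrier B"
    and eq: "\<And>i. i \<in> I \<Longrightarrow> g i = g' i" and v: "v \<in> mcarrier X"
  shows "dual_extend B g v = dual_extend B g' v"
  unfolding dual_extend_def
  by (rule msum_cong[OF B refl])
    (use g' eq v in \<open>auto simp: dual_support_def dual_basis_coord_closed mact_closed[OF B]\<close>)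

lemma dual_extend_basis: "v \<in> mcarrier X \<Longrightarrow> dual_extend X b v = v"
  unfolding dual_extend_def using dual_basis_expansion(2) by simp

lemma projective_if_dual_basis: "projective A X"
proof -
  let ?F = "free_rmod A (mcarrier X)"
  let ?s = "dual_extend ?F (\<lambda>i. free_unit A (b i))"
  have units: "free_unit A (b i) \<in> mcarrier ?F" if "i \<in> I" for i
    by (rule free_unit_closed[OF A.ring_axioms dual_basis_closed[OF that]])
  have "lincomb X (?s v) \<zero>\<^bsub>A\<^esub> = v" if v: "v \<in> mcarrier X" for v
  proof -
    have "lincomb X (?s v) \<zero>\<^bsub>A\<^esub> = dual_extend X (\<lambda>i. lincomb X (free_unit A (b i)) \<zero>\<^bsub>A\<^esub>) v"
      by (rule lin_map_dual_extend_comp[OF lin_map_lincomb[OF X] units v])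
    also have "\<dots> = dual_extend X b v"
      by (rule dual_extend_cong[OF X]) (use v in \<open>auto simp: lincomb_free_unit[OF X] dual_basis_closed\<close>)
    also have "\<dots> = v"
      using dual_extend_basis[OF v] .
    finally show ?thesis .
  qed
  moreover have "lin_map A X ?F ?s"
    by (rule lin_map_dual_extend[OF right_module_free_rmod[OF A.ring_axioms]]) (rule units)
  ultimately show ?thesis
    unfolding projective_def using X by blast
qed

end

lemma projective_right_module: "projective A X \<Longrightarrow> right_module A X"
  by (simp add: projective_def)

lemma projective_dual_basis:
  assumes "projective A X"
  obtains \<phi> where "dual_basis A X (mcarrier X) (\<lambda>p. p) \<phi>"
proof -
  obtain s where s: "lin_map A X (free_rmod A (mcarrier X)) s"
    "\<And>x. x \<in> mcarrier X \<Longrightarrow> lincomb X (s x) \<zero>\<^bsub>A\<^esub> = x"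
    using assms unfolding projective_def by blast
  note s' = lin_mapD[OF s(1)]
  have "dual_basis A X (mcarrier X) (\<lambda>p. p) (\<lambda>p v. s v p)"
    unfolding dual_basis_def
  proof (intro conjI ballI)
    fix v assume v: "v \<in> mcarrier X"
    let ?F = "{p \<in> mcarrier X. s v p \<noteq> \<zero>\<^bsub>A\<^esub>}"
    have "finite {p. s v p \<noteq> \<zero>\<^bsub>A\<^esub>}"
      using s'(3)[OF v] by simp
    then have "finite ?F"
      by (rule finite_subset[rotated]) auto
    then show "\<exists>F. finite F \<and> F \<subseteq> mcarrier X \<and> (\<forall>i\<in>mcarrier X - F. s v i = \<zero>\<^bsub>A\<^esub>) \<and>
        v = msum X (\<lambda>i. mact X i (s v i)) F"
      using s(2)[OF v] by (intro exI[of _ ?F]) (auto simp: lincomb_def)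
  qed (use s' in auto)
  then show ?thesis by (rule that)
qed

lemma projective_lifting:
  assumes P: "projective A P" and \<beta>: "lin_map A B C \<beta>" and \<phi>: "lin_map A P C \<phi>"
    and img: "\<And>x. x \<in> mcarrier P \<Longrightarrow> \<phi> x \<in> \<beta> ` mcarrier B"
  obtains \<psi> where "lin_map A P B \<psi>" "\<And>x. x \<in> mcarrier P \<Longrightarrow> \<beta> (\<psi> x) = \<phi> x"
proof -
  have rmP: "right_module A P"
    using P by (rule projective_right_module)
  obtain c where db: "dual_basis A P (mcarrier P) (\<lambda>p. p) c"
    using projective_dual_basis[OF P] by blast
  have "\<exists>y. y \<in> mcarrier B \<and> \<beta> y = \<phi> p" if "p \<in> mcarrier P" for p
    using img[OF that] by auto
  then obtain g where g: "\<And>p. p \<in> mcarrier P \<Longrightarrow> g p \<in> mcarrier B \<and> \<beta> (g p) = \<phi> p"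
    by metis
  let ?\<psi> = "dual_extend A (mcarrier P) c B g"
  have "\<beta> (?\<psi> x) = \<phi> x" if x: "x \<in> mcarrier P" for x
  proof -
    have "\<beta> (?\<psi> x) = dual_extend A (mcarrier P) c C (\<lambda>p. \<beta> (g p)) x"
      by (rule lin_map_dual_extend_comp[OF rmP db \<beta>]) (use g x in auto)
    also have "\<dots> = dual_extend A (mcarrier P) c C \<phi> x"
      by (rule dual_extend_cong[OF rmP db lin_mapD(2)[OF \<beta>]]) (use g x lin_mapD(3)[OF \<phi>] in auto)
    also have "\<dots> = \<phi> (dual_extend A (mcarrier P) c P (\<lambda>p. p) x)"
      by (rule lin_map_dual_extend_comp[OF rmP db \<phi> _ x, symmetric]) simp
    also have "\<dots> = \<phi> x"
      using dual_extend_basis[OF rmP db x] by simp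
    finally show ?thesis .
  qed
  then show ?thesis
    using that lin_map_dual_extend[OF rmP db lin_mapD(1)[OF \<beta>]] g by blast
qed

section \<open>Transport of modules along injections\<close>

definition map_rmod :: "('a \<Rightarrow> 'b) \<Rightarrow> ('r, 'a) rmod \<Rightarrow> ('r, 'b) rmod" where
  "map_rmod e X =
     \<lparr>mcarrier = e ` mcarrier X, mzero = e (mzero X),
      madd = (\<lambda>a b. e (madd X (inv_into (mcarrier X) e a) (inv_into (mcarrier X) e b))),
      mact = (\<lambda>a r. e (mact X (inv_into (mcarrier X) e a) r))\<rparr>"

definition map_lin :: "('r, 'a) rmod \<Rightarrow> ('a \<Rightarrow> 'b) \<Rightarrow> ('c \<Rightarrow> 'd) \<Rightarrow> ('a \<Rightarrow> 'c) \<Rightarrow> 'b \<Rightarrow> 'd" where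
  "map_lin X e e' f a = e' (f (inv_into (mcarrier X) e a))"

context
  fixes e :: "'a \<Rightarrow> 'b" and X :: "('r, 'a) rmod"
  assumes inj: "inj_on e (mcarrier X)"
begin

lemma map_rmod_carrier [simp]: "mcarrier (map_rmod e X) = e ` mcarrier X"
  by (simp add: map_rmod_def)

lemma map_rmod_zero [simp]: "mzero (map_rmod e X) = e (mzero X)"
  by (simp add: map_rmod_def)

lemma map_rmod_inv [simp]: "x \<in> mcarrier X \<Longrightarrow> inv_into (mcarrier X) e (e x) = x"
  using inj by (simp add: inv_into_f_f)

lemma map_rmod_madd [simp]:
  "x \<in> mcarrier X \<Longrightarrow> y \<in> mcarrier X \<Longrightarrow> madd (map_rmod e X) (e x) (e y) = e (madd X x y)"
  by (simp add: map_rmod_def)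

lemma map_rmod_mact [simp]: "x \<in> mcarrier X \<Longrightarrow> mact (map_rmod e X) (e x) r = e (mact X x r)"
  by (simp add: map_rmod_def)

lemma map_rmod_eq_iff [simp]: "x \<in> mcarrier X \<Longrightarrow> y \<in> mcarrier X \<Longrightarrow> e x = e y \<longleftrightarrow> x = y"
  using inj by (auto simp: inj_on_def)

lemma right_module_map_rmod:
  assumes X: "right_module A X"
  shows "right_module A (map_rmod e X)"
proof -
  have "comm_group (add_group (map_rmod e X))"
  proof (rule comm_groupI, goal_cases)
    case 3
    then show ?case using X by (auto simp: madd_assoc)
  next
    case 4
    then show ?case using X by (auto simp: madd_comm)
  next
    case (6 x)
    then obtain y where "y \<in> mcarrier X" "x = e y" by auto
    then show ?case using X by (intro bexI[of _ "e (mneg X y)"]) auto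
  qed (use X in auto)
  then show ?thesis
    using X unfolding right_module_def[of A "map_rmod e X"]
    by (auto simp: right_module_ring mact_r_distr mact_l_distr mact_assoc)
qed

lemma msum_map_rmod:
  assumes X: "right_module A X" and g: "\<And>i. i \<in> F \<Longrightarrow> g i \<in> mcarrier X"
  shows "msum (map_rmod e X) (\<lambda>i. e (g i)) F = e (msum X g F)"
  using g
proof (induct F rule: infinite_finite_induct)
  case (infinite F)
  then show ?case by (simp add: msum_def finprod_def)
next
  case empty
  then show ?case using X right_module_map_rmod[OF X] by simp
next
  case (insert x F)
  have "msum X g (insert x F) = madd X (g x) (msum X g F)"
    by (rule msum_insert[OF X]) (use insert in auto)
  moreover have "msum (map_rmod e X) (\<lambda>i. e (g i)) (insert x F) =
      madd (map_rmod e X) (e (g x)) (msum (map_rmod e X) (\<lambda>i. e (g i)) F)"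
    by (rule msum_insert[OF right_module_map_rmod[OF X]]) (use insert in auto)
  ultimately show ?case
    using insert X by simp
qed

lemma dual_basis_map_rmod:
  assumes X: "right_module A X" and db: "dual_basis A X I b \<phi>"
  shows "dual_basis A (map_rmod e X) I (\<lambda>i. e (b i)) (\<lambda>i w. \<phi> i (inv_into (mcarrier X) e w))"
  unfolding dual_basis_def
proof (intro conjI ballI)
  note db_simps = dual_basis_closed[OF X db] dual_basis_coord_closed[OF X db]
  fix v assume "v \<in> mcarrier (map_rmod e X)"
  then obtain x where x: "x \<in> mcarrier X" "v = e x" by auto
  obtain F where F: "finite F" "F \<subseteq> I" "\<forall>i\<in>I - F. \<phi> i x = \<zero>\<^bsub>A\<^esub>"
    "x = msum X (\<lambda>i. mact X (b i) (\<phi> i x)) F"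
    using db x unfolding dual_basis_def by blast
  have "msum (map_rmod e X) (\<lambda>i. mact (map_rmod e X) (e (b i)) (\<phi> i x)) F =
        msum (map_rmod e X) (\<lambda>i. e (mact X (b i) (\<phi> i x))) F"
    by (rule msum_cong[OF right_module_map_rmod[OF X] refl]) (use F x X db_simps in auto)
  also have "\<dots> = e (msum X (\<lambda>i. mact X (b i) (\<phi> i x)) F)"
    by (rule msum_map_rmod[OF X]) (use F(2) x db_simps in \<open>auto simp: mact_closed[OF X]\<close>)
  also have "\<dots> = e x"
    using F(4) by simp
  finally show "\<exists>F. finite F \<and> F \<subseteq> I \<and> (\<forall>i\<in>I - F. \<phi> i (inv_into (mcarrier X) e v) = \<zero>\<^bsub>A\<^esub>) \<and>
      v = msum (map_rmod e X) (\<lambda>i. mact (map_rmod e X) (e (b i)) (\<phi> i (inv_into (mcarrier X) e v))) F"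
    using F x by (intro exI[of _ F]) auto
qed (use X dual_basis_closed[OF X db] dual_basis_coord_closed[OF X db]
       dual_basis_coord_madd[OF X db] dual_basis_coord_mact[OF X db] in auto)

lemma projective_map_rmod: "projective A X \<Longrightarrow> projective A (map_rmod e X)"
  by (metis projective_dual_basis projective_if_dual_basis right_module_map_rmod
      dual_basis_map_rmod projective_right_module)

end

lemma map_lin_apply [simp]:
  "inj_on e (mcarrier X) \<Longrightarrow> x \<in> mcarrier X \<Longrightarrow> map_lin X e e' f (e x) = e' (f x)"
  by (simp add: map_lin_def inv_into_f_f)

lemma lin_map_map_lin:
  assumes f: "lin_map A X Y f" and e: "inj_on e (mcarrier X)" and e': "inj_on e' (mcarrier Y)"
  shows "lin_map A (map_rmod e X) (map_rmod e' Y) (map_lin X e e' f)"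
  using lin_mapD[OF f] e e'
  by (intro lin_mapI right_module_map_rmod) (auto simp: map_lin_def)

lemma mker_map_lin:
  assumes f: "lin_map A X Y f" and e: "inj_on e (mcarrier X)" and e': "inj_on e' (mcarrier Y)"
  shows "mker (map_rmod e X) (map_rmod e' Y) (map_lin X e e' f) = e ` mker X Y f"
  using lin_mapD[OF f] e e' mzero_closed[OF lin_mapD(2)[OF f]]
  by (auto simp: mker_def map_rmod_eq_iff[OF e'])

lemma image_map_lin:
  "inj_on e (mcarrier X) \<Longrightarrow> map_lin X e e' f ` mcarrier (map_rmod e X) = e' ` f ` mcarrier X"
  by (force simp: image_iff)

lemma lin_map_pullback:
  assumes g: "lin_map A (map_rmod e X) (map_rmod e' Y) g"
    and e: "inj_on e (mcarrier X)" and e': "inj_on e' (mcarrier Y)"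
    and X: "right_module A X" and Y: "right_module A Y"
  shows "lin_map A X Y (\<lambda>x. inv_into (mcarrier Y) e' (g (e x)))"
proof -
  note g' = lin_mapD[OF g]
  have g_img: "\<exists>y\<in>mcarrier Y. g (e x) = e' y" if "x \<in> mcarrier X" for x
    using g'(3)[of "e x"] that e by (auto simp: map_rmod_carrier[OF e'])
  show ?thesis
  proof (rule lin_mapI[OF X Y])
    fix x assume "x \<in> mcarrier X"
    then show "inv_into (mcarrier Y) e' (g (e x)) \<in> mcarrier Y"
      using g_img e' by fastforce
  next
    fix x y assume x: "x \<in> mcarrier X" and y: "y \<in> mcarrier X"
    obtain u w where u: "u \<in> mcarrier Y" "g (e x) = e' u" and w: "w \<in> mcarrier Y" "g (e y) = e' w"
      using g_img[OF x] g_img[OF y] by blast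
    have "g (e (madd X x y)) = madd (map_rmod e' Y) (g (e x)) (g (e y))"
      using g'(4)[of "e x" "e y"] x y e by simp
    also have "\<dots> = e' (madd Y u w)"
      using u w e' by simp
    finally show "inv_into (mcarrier Y) e' (g (e (madd X x y))) =
        madd Y (inv_into (mcarrier Y) e' (g (e x))) (inv_into (mcarrier Y) e' (g (e y)))"
      using u w e' Y by simp
  next
    fix x r assume x: "x \<in> mcarrier X" and r: "r \<in> carrier A"
    obtain u where u: "u \<in> mcarrier Y" "g (e x) = e' u"
      using g_img[OF x] by blast
    have "g (e (mact X x r)) = mact (map_rmod e' Y) (g (e x)) r"
      using g'(5)[of "e x" r] x r e by simp
    also have "\<dots> = e' (mact Y u r)"
      using u e' by simp
    finally show "inv_into (mcarrier Y) e' (g (e (mact X x r))) = mact Y (inv_into (mcarrier Y) e' (g (e x))) r"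
      using u r e' Y by simp
  qed
qed

section \<open>Projective resolutions\<close>

definition proj_resolution :: "('r, 'a) ring_scheme \<Rightarrow> ('r, 'm) rmod \<Rightarrow> nat \<Rightarrow> (nat \<Rightarrow> ('r, 'q) rmod)
                               \<Rightarrow> (nat \<Rightarrow> 'q \<Rightarrow> 'q) \<Rightarrow> ('q \<Rightarrow> 'm) \<Rightarrow> bool" where
  "proj_resolution R M n P d \<epsilon> \<longleftrightarrow>
     (\<forall>k\<le>n. projective R (P k)) \<and>
     lin_map R (P 0) M \<epsilon> \<and> \<epsilon> ` mcarrier (P 0) = mcarrier M \<and>
     (\<forall>k<n. lin_map R (P (Suc k)) (P k) (d k)) \<and>
     mker (P 0) M \<epsilon> = (if n = 0 then {mzero (P 0)} else d 0 ` mcarrier (P 1)) \<and>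
     (\<forall>k<n. mker (P (Suc k)) (P k) (d k) =
              (if Suc k < n then d (Suc k) ` mcarrier (P (Suc (Suc k))) else {mzero (P (Suc k))}))"

lemma pdim_le_iff:
  fixes R :: "('r, 'a) ring_scheme" and M :: "('r, 'm) rmod"
  shows "pdim_le R M n \<longleftrightarrow>
    (\<exists>(P :: nat \<Rightarrow> ('r, ('m \<times> 'r \<times> nat) \<Rightarrow> 'r) rmod) d \<epsilon>. proj_resolution R M n P d \<epsilon>)"
  by (simp only: pdim_le_def proj_resolution_def)

definition res_kernel :: "('r, 'm) rmod \<Rightarrow> (nat \<Rightarrow> ('r, 'q) rmod) \<Rightarrow> (nat \<Rightarrow> 'q \<Rightarrow> 'q)
                          \<Rightarrow> ('q \<Rightarrow> 'm) \<Rightarrow> nat \<Rightarrow> 'q set" where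
  "res_kernel X P d e k = (if k = 0 then mker (P 0) X e else mker (P k) (P (k - 1)) (d (k - 1)))"

lemma res_kernel_0 [simp]: "res_kernel X P d e 0 = mker (P 0) X e"
  by (simp add: res_kernel_def)

lemma res_kernel_Suc [simp]: "res_kernel X P d e (Suc k) = mker (P (Suc k)) (P k) (d k)"
  by (simp add: res_kernel_def)

lemma res_kernel_subset: "res_kernel X P d e k \<subseteq> mcarrier (P k)"
  by (auto simp: res_kernel_def mker_def)

lemma proj_resolution_iff:
  "proj_resolution A X n P d e \<longleftrightarrow>
     (\<forall>k\<le>n. projective A (P k)) \<and> lin_map A (P 0) X e \<and> e ` mcarrier (P 0) = mcarrier X \<and>
     (\<forall>k<n. lin_map A (P (Suc k)) (P k) (d k)) \<and>
     (\<forall>k\<le>n. res_kernel X P d e k =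
                (if k < n then d k ` mcarrier (P (Suc k)) else {mzero (P k)}))"
proof -
  have split: "(\<forall>k\<le>n. Q k) \<longleftrightarrow> Q 0 \<and> (\<forall>k<n. Q (Suc k))" for Q :: "nat \<Rightarrow> bool"
    by (metis Suc_le_eq le0 not0_implies_Suc)
  have "(\<forall>k\<le>n. res_kernel X P d e k = (if k < n then d k ` mcarrier (P (Suc k)) else {mzero (P k)})) \<longleftrightarrow>
        mker (P 0) X e = (if n = 0 then {mzero (P 0)} else d 0 ` mcarrier (P 1)) \<and>
        (\<forall>k<n. mker (P (Suc k)) (P k) (d k) =
                 (if Suc k < n then d (Suc k) ` mcarrier (P (Suc (Suc k))) else {mzero (P (Suc k))}))"
    unfolding split by (cases "n = 0") (simp_all add: One_nat_def)
  then show ?thesis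
    unfolding proj_resolution_def by simp
qed

context
  fixes A :: "('r, 'a) ring_scheme" and X :: "('r, 'm) rmod" and n :: nat
    and P :: "nat \<Rightarrow> ('r, 'q) rmod" and d :: "nat \<Rightarrow> 'q \<Rightarrow> 'q" and e :: "'q \<Rightarrow> 'm"
  assumes res: "proj_resolution A X n P d e"
begin

lemma resolution_projective: "k \<le> n \<Longrightarrow> projective A (P k)"
  using res by (simp add: proj_resolution_def)

lemma resolution_right_module: "k \<le> n \<Longrightarrow> right_module A (P k)"
  using resolution_projective projective_right_module by blast

lemma resolution_augmentation: "lin_map A (P 0) X e"
  using res by (simp add: proj_resolution_def)

lemma resolution_augmentation_onto: "e ` mcarrier (P 0) = mcarrier X"
  using res by (simp add: proj_resolution_def)

lemma resolution_differential: "k < n \<Longrightarrow> lin_map A (P (Suc k)) (P k) (d k)"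
  using res by (simp add: proj_resolution_def)

lemma resolution_exact: "k < n \<Longrightarrow> res_kernel X P d e k = d k ` mcarrier (P (Suc k))"
  using res by (simp add: proj_resolution_iff)

lemma resolution_res_kernel_top: "res_kernel X P d e n = {mzero (P n)}"
  using res by (simp add: proj_resolution_iff)

lemma resolution_differential_res_kernel:
  "k < n \<Longrightarrow> x \<in> mcarrier (P (Suc k)) \<Longrightarrow> d k x \<in> res_kernel X P d e k"
  using resolution_exact by blast

end

subsection \<open>Comparison of resolutions\<close>

definition chain_map :: "('r, 'a) ring_scheme \<Rightarrow> nat \<Rightarrow> (nat \<Rightarrow> ('r, 'p) rmod) \<Rightarrow> (nat \<Rightarrow> 'p \<Rightarrow> 'p)
                         \<Rightarrow> (nat \<Rightarrow> ('r, 'q) rmod) \<Rightarrow> (nat \<Rightarrow> 'q \<Rightarrow> 'q) \<Rightarrow> (nat \<Rightarrow> 'p \<Rightarrow> 'q) \<Rightarrow> bool" where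
  "chain_map A k P dP Q dQ f \<longleftrightarrow>
     (\<forall>j\<le>k. lin_map A (P j) (Q j) (f j)) \<and>
     (\<forall>j<k. \<forall>x\<in>mcarrier (P (Suc j)). dQ j (f (Suc j) x) = f j (dP j x))"

lemma chain_map_lin: "chain_map A k P dP Q dQ f \<Longrightarrow> j \<le> k \<Longrightarrow> lin_map A (P j) (Q j) (f j)"
  by (simp add: chain_map_def)

lemma chain_map_comm:
  "chain_map A k P dP Q dQ f \<Longrightarrow> j < k \<Longrightarrow> x \<in> mcarrier (P (Suc j)) \<Longrightarrow>
   dQ j (f (Suc j) x) = f j (dP j x)"
  by (simp add: chain_map_def)

lemma chain_map_le: "chain_map A k P dP Q dQ f \<Longrightarrow> m \<le> k \<Longrightarrow> chain_map A m P dP Q dQ f"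
  by (simp add: chain_map_def)

lemma chain_map_extend:
  assumes f: "chain_map A m P dP Q dQ f" and \<psi>: "lin_map A (P (Suc m)) (Q (Suc m)) \<psi>"
    and comm: "\<And>x. x \<in> mcarrier (P (Suc m)) \<Longrightarrow> dQ m (\<psi> x) = f m (dP m x)"
  shows "chain_map A (Suc m) P dP Q dQ (f(Suc m := \<psi>))"
  unfolding chain_map_def
proof (intro conjI allI impI ballI)
  fix j assume "j \<le> Suc m"
  then show "lin_map A (P j) (Q j) ((f(Suc m := \<psi>)) j)"
    using f \<psi> by (cases "j = Suc m") (auto simp: chain_map_def)
next
  fix j x assume "j < Suc m" "x \<in> mcarrier (P (Suc j))"
  then show "dQ j ((f(Suc m := \<psi>)) (Suc j) x) = (f(Suc m := \<psi>)) j (dP j x)"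
    using f comm by (cases "j = m") (auto simp: chain_map_def)
qed

lemma chain_map_id:
  "(\<And>j. j \<le> k \<Longrightarrow> right_module A (P j)) \<Longrightarrow> chain_map A k P d P d (\<lambda>j x. x)"
  by (simp add: chain_map_def lin_map_id)

lemma chain_map_compose:
  assumes f: "chain_map A k P dP Q dQ f" and g: "chain_map A k Q dQ T dT g"
    and dP: "\<And>j. j < k \<Longrightarrow> lin_map A (P (Suc j)) (P j) (dP j)"
  shows "chain_map A k P dP T dT (\<lambda>j x. g j (f j x))"
  unfolding chain_map_def
proof (intro conjI allI impI ballI)
  fix j x assume j: "j < k" and x: "x \<in> mcarrier (P (Suc j))"
  have "f (Suc j) x \<in> mcarrier (Q (Suc j))"
    using lin_mapD(3)[OF chain_map_lin[OF f] x] j by simp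
  then show "dT j (g (Suc j) (f (Suc j) x)) = g j (f j (dP j x))"
    using chain_map_comm[OF g j] chain_map_comm[OF f j x] by simp
qed (use chain_map_lin[OF f] chain_map_lin[OF g] lin_map_compose in blast)

lemma chain_map_diff:
  assumes f: "chain_map A k P dP Q dQ f" and g: "chain_map A k P dP Q dQ g"
    and dP: "\<And>j. j < k \<Longrightarrow> lin_map A (P (Suc j)) (P j) (dP j)"
    and dQ: "\<And>j. j < k \<Longrightarrow> lin_map A (Q (Suc j)) (Q j) (dQ j)"
  shows "chain_map A k P dP Q dQ (\<lambda>j x. msub (Q j) (f j x) (g j x))"
  unfolding chain_map_def
proof (intro conjI allI impI ballI)
  fix j x assume j: "j < k" and x: "x \<in> mcarrier (P (Suc j))"
  have "dQ j (msub (Q (Suc j)) (f (Suc j) x) (g (Suc j) x)) =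
        msub (Q j) (dQ j (f (Suc j) x)) (dQ j (g (Suc j) x))"
    using lin_map_msub[OF dQ[OF j]] lin_mapD(3)[OF chain_map_lin[OF f] x] lin_mapD(3)[OF chain_map_lin[OF g] x] j
    by simp
  then show "dQ j (msub (Q (Suc j)) (f (Suc j) x) (g (Suc j) x)) = msub (Q j) (f j (dP j x)) (g j (dP j x))"
    using chain_map_comm[OF f j x] chain_map_comm[OF g j x] by simp
qed (use chain_map_lin[OF f] chain_map_lin[OF g] lin_map_diff in blast)

lemma chain_map_res_kernel:
  assumes f: "chain_map A k P dP Q dQ f" and aug: "\<forall>x\<in>mcarrier (P 0). eQ (f 0 x) = eP x"
    and j: "j \<le> k" and z: "z \<in> res_kernel X P dP eP j"
  shows "f j z \<in> res_kernel X Q dQ eQ j"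
proof (cases j)
  case 0
  then show ?thesis
    using z aug lin_mapD(3)[OF chain_map_lin[OF f j]] by (auto simp: mker_def)
next
  case (Suc i)
  then have "dQ i (f j z) = f i (mzero (P i))"
    using z j chain_map_comm[OF f, of i z] by (auto simp: mker_def)
  also have "\<dots> = mzero (Q i)"
    using lin_map_zero[OF chain_map_lin[OF f]] Suc j by simp
  finally show ?thesis
    using z Suc lin_mapD(3)[OF chain_map_lin[OF f j]] by (auto simp: mker_def)
qed

lemma resolution_chain_map:
  assumes P: "proj_resolution A X N P dP eP" and Q: "proj_resolution A X N' Q dQ eQ"
    and k: "k \<le> N" "k \<le> N'"
  obtains f where "chain_map A k P dP Q dQ f" "\<forall>x\<in>mcarrier (P 0). eQ (f 0 x) = eP x"
proof -
  have "\<exists>f. chain_map A m P dP Q dQ f \<and> (\<forall>x\<in>mcarrier (P 0). eQ (f 0 x) = eP x)" if "m \<le> k" for m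
    using that
  proof (induction m)
    case 0
    obtain \<psi> where "lin_map A (P 0) (Q 0) \<psi>" "\<And>x. x \<in> mcarrier (P 0) \<Longrightarrow> eQ (\<psi> x) = eP x"
      by (rule projective_lifting[OF resolution_projective[OF P le0] resolution_augmentation[OF Q]
            resolution_augmentation[OF P]])
        (use resolution_augmentation_onto[OF Q] lin_mapD(3)[OF resolution_augmentation[OF P]] in auto)
    then show ?case
      by (intro exI[of _ "\<lambda>_. \<psi>"]) (auto simp: chain_map_def)
  next
    case (Suc m)
    then obtain f where f: "chain_map A m P dP Q dQ f" and aug: "\<forall>x\<in>mcarrier (P 0). eQ (f 0 x) = eP x"
      by auto
    have m: "m < N" "m < N'"
      using Suc.prems k by auto
    have img: "f m (dP m x) \<in> dQ m ` mcarrier (Q (Suc m))" if "x \<in> mcarrier (P (Suc m))" for x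
      using chain_map_res_kernel[OF f aug order.refl resolution_differential_res_kernel[OF P m(1) that]]
        resolution_exact[OF Q m(2)] by simp
    have lin: "lin_map A (P (Suc m)) (Q m) (\<lambda>x. f m (dP m x))"
      using lin_map_compose[OF resolution_differential[OF P m(1)] chain_map_lin[OF f order.refl]] .
    have "Suc m \<le> N"
      using Suc.prems k by simp
    obtain \<psi> where \<psi>: "lin_map A (P (Suc m)) (Q (Suc m)) \<psi>"
      "\<And>x. x \<in> mcarrier (P (Suc m)) \<Longrightarrow> dQ m (\<psi> x) = f m (dP m x)"
      using projective_lifting[OF resolution_projective[OF P \<open>Suc m \<le> N\<close>]
          resolution_differential[OF Q m(2)] lin img] by blast
    show ?case
    proof (intro exI conjI)
      show "chain_map A (Suc m) P dP Q dQ (f(Suc m := \<psi>))"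
        by (rule chain_map_extend[OF f \<psi>])
      show "\<forall>x\<in>mcarrier (P 0). eQ ((f(Suc m := \<psi>)) 0 x) = eP x"
        using aug by simp
    qed
  qed
  then show ?thesis
    using that by blast
qed

definition null_homotopy :: "('r, 'a) ring_scheme \<Rightarrow> nat \<Rightarrow> (nat \<Rightarrow> ('r, 'q) rmod) \<Rightarrow> (nat \<Rightarrow> 'q \<Rightarrow> 'q)
                             \<Rightarrow> (nat \<Rightarrow> 'q \<Rightarrow> 'q) \<Rightarrow> (nat \<Rightarrow> 'q \<Rightarrow> 'q) \<Rightarrow> bool" where
  "null_homotopy A k P d \<phi> h \<longleftrightarrow>
     (\<forall>j\<le>k. lin_map A (P j) (P (Suc j)) (h j)) \<and>
     (\<forall>x\<in>mcarrier (P 0). d 0 (h 0 x) = \<phi> 0 x) \<and>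
     (\<forall>j<k. \<forall>x\<in>mcarrier (P (Suc j)).
        d (Suc j) (h (Suc j) x) = msub (P (Suc j)) (\<phi> (Suc j) x) (h j (d j x)))"

lemma null_homotopy_boundary:
  assumes P: "proj_resolution A X N P d e" and \<phi>: "chain_map A m P d P d \<phi>"
    and h: "null_homotopy A m P d \<phi> h" and m: "m < N" and x: "x \<in> mcarrier (P (Suc m))"
  shows "d m (h m (d m x)) = \<phi> m (d m x)"
proof (cases m)
  case 0
  then show ?thesis
    using h x lin_mapD(3)[OF resolution_differential[OF P m]] by (simp add: null_homotopy_def)
next
  case (Suc i)
  have dx: "d m x \<in> mcarrier (P m)"
    using lin_mapD(3)[OF resolution_differential[OF P m] x] .
  have "d i (d m x) = mzero (P i)"
    using resolution_differential_res_kernel[OF P m x] Suc by (simp add: mker_def)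
  moreover have "h i (mzero (P i)) = mzero (P m)"
    using h Suc lin_map_zero[of A "P i" "P (Suc i)" "h i"] by (simp add: null_homotopy_def)
  moreover have "\<phi> m (d m x) \<in> mcarrier (P m)"
    using lin_mapD(3)[OF chain_map_lin[OF \<phi> order.refl] dx] .
  ultimately show ?thesis
    using h dx Suc m by (simp add: null_homotopy_def msub_zero[OF resolution_right_module[OF P]])
qed

lemma null_homotopy_extend:
  assumes h: "null_homotopy A m P d \<phi> h" and \<psi>: "lin_map A (P (Suc m)) (P (Suc (Suc m))) \<psi>"
    and comm: "\<And>x. x \<in> mcarrier (P (Suc m)) \<Longrightarrow>
                d (Suc m) (\<psi> x) = msub (P (Suc m)) (\<phi> (Suc m) x) (h m (d m x))"
  shows "null_homotopy A (Suc m) P d \<phi> (h(Suc m := \<psi>))"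
  unfolding null_homotopy_def
proof (intro conjI allI impI ballI)
  fix j assume "j \<le> Suc m"
  then show "lin_map A (P j) (P (Suc j)) ((h(Suc m := \<psi>)) j)"
    using h \<psi> by (cases "j = Suc m") (auto simp: null_homotopy_def)
next
  fix x assume "x \<in> mcarrier (P 0)"
  then show "d 0 ((h(Suc m := \<psi>)) 0 x) = \<phi> 0 x"
    using h by (simp add: null_homotopy_def)
next
  fix j x assume "j < Suc m" "x \<in> mcarrier (P (Suc j))"
  then show "d (Suc j) ((h(Suc m := \<psi>)) (Suc j) x) =
      msub (P (Suc j)) (\<phi> (Suc j) x) ((h(Suc m := \<psi>)) j (d j x))"
    using h comm by (cases "j = m") (auto simp: null_homotopy_def)
qed

lemma null_homotopy_next_cycle:
  assumes P: "proj_resolution A X N P d e" and \<phi>: "chain_map A (Suc m) P d P d \<phi>"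
    and h: "null_homotopy A m P d \<phi> h" and m: "Suc m < N" and x: "x \<in> mcarrier (P (Suc m))"
  shows "msub (P (Suc m)) (\<phi> (Suc m) x) (h m (d m x)) \<in> res_kernel X P d e (Suc m)"
proof -
  have dm: "lin_map A (P (Suc m)) (P m) (d m)"
    using resolution_differential[OF P] m by simp
  have hm: "lin_map A (P m) (P (Suc m)) (h m)"
    using h by (simp add: null_homotopy_def)
  have dx: "d m x \<in> mcarrier (P m)"
    using lin_mapD(3)[OF dm x] .
  have \<phi>x: "\<phi> (Suc m) x \<in> mcarrier (P (Suc m))" "\<phi> m (d m x) \<in> mcarrier (P m)"
    using lin_mapD(3)[OF chain_map_lin[OF \<phi>]] x dx by auto
  have "d m (msub (P (Suc m)) (\<phi> (Suc m) x) (h m (d m x))) =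
        msub (P m) (d m (\<phi> (Suc m) x)) (d m (h m (d m x)))"
    using lin_map_msub[OF dm] \<phi>x lin_mapD(3)[OF hm dx] by simp
  also have "\<dots> = msub (P m) (\<phi> m (d m x)) (\<phi> m (d m x))"
    using chain_map_comm[OF \<phi> _ x] null_homotopy_boundary[OF P chain_map_le[OF \<phi>] h _ x] m by simp
  also have "\<dots> = mzero (P m)"
    using \<phi>x m by (simp add: msub_self[OF resolution_right_module[OF P]])
  finally show ?thesis
    using lin_mapD(3)[OF lin_map_diff[OF chain_map_lin[OF \<phi>] lin_map_compose[OF dm hm]] x]
    by (simp add: mker_def)
qed

lemma resolution_null_homotopy:
  assumes P: "proj_resolution A X N P d e" and k: "k < N"
    and \<phi>: "chain_map A k P d P d \<phi>" and \<phi>0: "\<forall>x\<in>mcarrier (P 0). e (\<phi> 0 x) = mzero X"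
  obtains h where "null_homotopy A k P d \<phi> h"
proof -
  have "\<exists>h. null_homotopy A m P d \<phi> h" if "m \<le> k" for m
    using that
  proof (induction m)
    case 0
    have "\<phi> 0 x \<in> d 0 ` mcarrier (P 1)" if "x \<in> mcarrier (P 0)" for x
      using \<phi>0 that lin_mapD(3)[OF chain_map_lin[OF \<phi> le0]] resolution_exact[OF P, of 0] k
      by (auto simp: mker_def)
    then obtain \<psi> where "lin_map A (P 0) (P 1) \<psi>" "\<And>x. x \<in> mcarrier (P 0) \<Longrightarrow> d 0 (\<psi> x) = \<phi> 0 x"
      using projective_lifting[OF resolution_projective[OF P le0] resolution_differential[OF P]
          chain_map_lin[OF \<phi> le0]] k by auto
    then show ?case
      by (intro exI[of _ "\<lambda>_. \<psi>"]) (simp add: null_homotopy_def)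
  next
    case (Suc m)
    then obtain h where h: "null_homotopy A m P d \<phi> h"
      by auto
    have m: "Suc m < N"
      using Suc.prems k by simp
    let ?\<psi> = "\<lambda>x. msub (P (Suc m)) (\<phi> (Suc m) x) (h m (d m x))"
    have dm: "lin_map A (P (Suc m)) (P m) (d m)"
      using resolution_differential[OF P] m by simp
    have hm: "lin_map A (P m) (P (Suc m)) (h m)"
      using h by (simp add: null_homotopy_def)
    have lin: "lin_map A (P (Suc m)) (P (Suc m)) ?\<psi>"
      by (rule lin_map_diff[OF chain_map_lin[OF \<phi> Suc.prems] lin_map_compose[OF dm hm]])
    have img: "?\<psi> x \<in> d (Suc m) ` mcarrier (P (Suc (Suc m)))" if "x \<in> mcarrier (P (Suc m))" for x
      using null_homotopy_next_cycle[OF P chain_map_le[OF \<phi> Suc.prems] h m that]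
        resolution_exact[OF P m] by simp
    have "Suc m \<le> N"
      using m by simp
    then obtain \<psi> where \<psi>: "lin_map A (P (Suc m)) (P (Suc (Suc m))) \<psi>"
      "\<And>x. x \<in> mcarrier (P (Suc m)) \<Longrightarrow> d (Suc m) (\<psi> x) = ?\<psi> x"
      using projective_lifting[OF resolution_projective[OF P] resolution_differential[OF P m] lin img]
      by blast
    show ?case
      using null_homotopy_extend[OF h \<psi>] by blast
  qed
  then show ?thesis
    using that by blast
qed

definition lin_retraction :: "('r, 'a) ring_scheme \<Rightarrow> ('r, 'm) rmod \<Rightarrow> 'm set \<Rightarrow> ('m \<Rightarrow> 'm) \<Rightarrow> bool" where
  "lin_retraction A X C \<rho> \<longleftrightarrow> lin_map A X X \<rho> \<and> (\<forall>x\<in>mcarrier X. \<rho> x \<in> C) \<and> (\<forall>z\<in>C. \<rho> z = z)"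

lemma null_homotopy_retraction:
  assumes Q: "proj_resolution A X N Q d e" and k: "k < N"
    and h: "null_homotopy A k Q d \<phi> h" and \<phi>_fix: "\<And>z. z \<in> res_kernel X Q d e k \<Longrightarrow> \<phi> k z = z"
  shows "lin_retraction A (Q k) (res_kernel X Q d e k) (\<lambda>x. d k (h k x))"
proof -
  have hk: "lin_map A (Q k) (Q (Suc k)) (h k)"
    using h by (simp add: null_homotopy_def)
  show ?thesis
    unfolding lin_retraction_def
  proof (intro conjI ballI)
    show "lin_map A (Q k) (Q k) (\<lambda>x. d k (h k x))"
      by (rule lin_map_compose[OF hk resolution_differential[OF Q k]])
  next
    fix x assume "x \<in> mcarrier (Q k)"
    then show "d k (h k x) \<in> res_kernel X Q d e k"
      using resolution_differential_res_kernel[OF Q k] lin_mapD(3)[OF hk] by blast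
  next
    fix z assume z: "z \<in> res_kernel X Q d e k"
    show "d k (h k z) = z"
    proof (cases k)
      case 0
      then show ?thesis
        using h z \<phi>_fix by (auto simp: null_homotopy_def mker_def)
    next
      case (Suc i)
      then have "d i z = mzero (Q i)" "z \<in> mcarrier (Q k)"
        using z by (auto simp: mker_def)
      moreover have "h i (mzero (Q i)) = mzero (Q k)"
        using lin_map_zero[of A "Q i" "Q (Suc i)" "h i"] h Suc by (simp add: null_homotopy_def)
      ultimately show ?thesis
        using h Suc \<phi>_fix[OF z] k
        by (auto simp: null_homotopy_def msub_zero[OF resolution_right_module[OF Q]])
    qed
  qed
qed

text \<open>The retraction is \<open>d k \<circ> h k\<close> for a null homotopy \<open>h\<close> of \<open>id - g \<circ> f\<close>, where \<open>f\<close>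
  and \<open>g\<close> compare the two resolutions; \<open>f k\<close> kills the kernel because the shorter
  resolution stops at \<open>k\<close>.\<close>

lemma resolution_kernel_retract:
  assumes Q: "proj_resolution A X N Q d e" and Q': "proj_resolution A X k Q' d' e'" and k: "k < N"
  obtains \<rho> where "lin_retraction A (Q k) (res_kernel X Q d e k) \<rho>"
proof -
  obtain f where f: "chain_map A k Q d Q' d' f" and f0: "\<forall>x\<in>mcarrier (Q 0). e' (f 0 x) = e x"
    using resolution_chain_map[OF Q Q'] k by auto
  obtain g where g: "chain_map A k Q' d' Q d g" and g0: "\<forall>x\<in>mcarrier (Q' 0). e (g 0 x) = e' x"
    using resolution_chain_map[OF Q' Q] k by auto
  define \<phi> where "\<phi> j x = msub (Q j) x (g j (f j x))" for j x
  have dQ: "\<And>j. j < k \<Longrightarrow> lin_map A (Q (Suc j)) (Q j) (d j)"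
    using resolution_differential[OF Q] k by simp
  have \<phi>: "chain_map A k Q d Q d \<phi>"
    unfolding \<phi>_def
    by (rule chain_map_diff[OF chain_map_id chain_map_compose[OF f g dQ] dQ dQ])
      (use resolution_right_module[OF Q] k in simp)
  have \<phi>0: "\<forall>x\<in>mcarrier (Q 0). e (\<phi> 0 x) = mzero X"
  proof
    fix x assume x: "x \<in> mcarrier (Q 0)"
    have fx: "f 0 x \<in> mcarrier (Q' 0)"
      using lin_mapD(3)[OF chain_map_lin[OF f le0] x] .
    then have "e (\<phi> 0 x) = msub X (e x) (e (g 0 (f 0 x)))"
      unfolding \<phi>_def using lin_map_msub[OF resolution_augmentation[OF Q] x]
        lin_mapD(3)[OF chain_map_lin[OF g le0]] by simp
    then show "e (\<phi> 0 x) = mzero X"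
      using x fx f0 g0 lin_mapD(2,3)[OF resolution_augmentation[OF Q]] by simp
  qed
  obtain h where h: "null_homotopy A k Q d \<phi> h"
    using resolution_null_homotopy[OF Q k \<phi> \<phi>0] .
  have \<phi>_fix: "\<phi> k z = z" if z: "z \<in> res_kernel X Q d e k" for z
  proof -
    have "f k z \<in> res_kernel X Q' d' e' k"
      by (rule chain_map_res_kernel[OF f f0 order.refl z])
    then have "g k (f k z) = mzero (Q k)"
      using resolution_res_kernel_top[OF Q'] lin_map_zero[OF chain_map_lin[OF g order.refl]] by simp
    moreover have "z \<in> mcarrier (Q k)"
      using z res_kernel_subset[of X Q d e k] by blast
    ultimately show ?thesis
      using k by (simp add: \<phi>_def msub_zero[OF resolution_right_module[OF Q]])
  qed
  show ?thesis
    using null_homotopy_retraction[OF Q k h \<phi>_fix] that by blast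
qed

subsection \<open>Direct summands and shortening resolutions\<close>

lemma right_module_image:
  assumes f: "lin_map A X Y f"
  shows "right_module A (Y\<lparr>mcarrier := f ` mcarrier X\<rparr>)"
proof -
  note f' = lin_mapD[OF f]
  show ?thesis
  proof (rule right_module_restrict[OF f'(2)])
    show "mzero Y \<in> f ` mcarrier X"
      using lin_map_zero[OF f] mzero_closed[OF f'(1)] by (metis image_eqI)
  next
    fix x y assume "x \<in> f ` mcarrier X" "y \<in> f ` mcarrier X"
    then obtain a b where "a \<in> mcarrier X" "b \<in> mcarrier X" "x = f a" "y = f b"
      by blast
    then show "madd Y x y \<in> f ` mcarrier X"
      using f' by (auto intro!: image_eqI[of _ f "madd X a b"])
  next
    fix x r assume "x \<in> f ` mcarrier X" and r: "r \<in> carrier A"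
    then obtain a where "a \<in> mcarrier X" "x = f a"
      by blast
    then show "mact Y x r \<in> f ` mcarrier X"
      using f' r by (auto intro!: image_eqI[of _ f "mact X a r"])
  qed (use f' in auto)
qed

text \<open>The images \<open>\<pi> p\<close>, with the coordinates of a dual basis of \<open>X\<close>, form a dual basis of
  the image.\<close>

lemma projective_idempotent_image:
  assumes X: "projective A X" and \<pi>: "lin_map A X X \<pi>"
    and idem: "\<And>x. x \<in> mcarrier X \<Longrightarrow> \<pi> (\<pi> x) = \<pi> x"
  shows "projective A (X\<lparr>mcarrier := \<pi> ` mcarrier X\<rparr>)"
proof -
  let ?K = "X\<lparr>mcarrier := \<pi> ` mcarrier X\<rparr>"
  have rmX: "right_module A X"
    using X by (rule projective_right_module)
  have rmK: "right_module A ?K"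
    by (rule right_module_image[OF \<pi>])
  note \<pi>' = lin_mapD[OF \<pi>]
  obtain \<phi> where db: "dual_basis A X (mcarrier X) (\<lambda>p. p) \<phi>"
    using projective_dual_basis[OF X] by blast
  note coord = dual_basis_coord_closed[OF rmX db] dual_basis_coord_madd[OF rmX db]
    dual_basis_coord_mact[OF rmX db]
  have "dual_basis A ?K (mcarrier X) \<pi> \<phi>"
    unfolding dual_basis_def
  proof (intro conjI ballI)
    fix v assume "v \<in> mcarrier ?K"
    then obtain x where x: "x \<in> mcarrier X" "v = \<pi> x"
      by auto
    have v: "v \<in> mcarrier X"
      using x \<pi>' by simp
    obtain F where F: "finite F" "F \<subseteq> mcarrier X" "\<forall>p\<in>mcarrier X - F. \<phi> p v = \<zero>\<^bsub>A\<^esub>"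
      "v = msum X (\<lambda>p. mact X p (\<phi> p v)) F"
      using db v unfolding dual_basis_def by blast
    have "v = \<pi> v"
      using idem x by simp
    also have "\<dots> = msum X (\<lambda>p. \<pi> (mact X p (\<phi> p v))) F"
      by (subst F(4), rule lin_map_msum[OF \<pi>]) (use F v rmX coord in \<open>auto simp: subset_iff\<close>)
    also have "\<dots> = msum X (\<lambda>p. mact ?K (\<pi> p) (\<phi> p v)) F"
      by (rule msum_cong[OF rmX refl]) (use F v rmX coord \<pi>' in \<open>auto simp: subset_iff\<close>)
    also have "\<dots> = msum ?K (\<lambda>p. mact ?K (\<pi> p) (\<phi> p v)) F"
      by (rule msum_restrict[OF rmX rmK, symmetric])
        (use F v coord \<pi>' rmK in \<open>auto simp: subset_iff intro: mact_closed[OF rmK, simplified]\<close>)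
    finally show "\<exists>F. finite F \<and> F \<subseteq> mcarrier X \<and> (\<forall>p\<in>mcarrier X - F. \<phi> p v = \<zero>\<^bsub>A\<^esub>) \<and>
        v = msum ?K (\<lambda>p. mact ?K (\<pi> p) (\<phi> p v)) F"
      using F by blast
  qed (use coord \<pi>' in auto)
  then show ?thesis
    by (rule projective_if_dual_basis[OF rmK])
qed

lemma lin_retraction_pullback:
  assumes \<rho>: "lin_retraction A (map_rmod e X) (e ` C) \<rho>" and e: "inj_on e (mcarrier X)"
    and X: "right_module A X" and C: "C \<subseteq> mcarrier X"
  shows "lin_retraction A X C (\<lambda>x. inv_into (mcarrier X) e (\<rho> (e x)))"
  unfolding lin_retraction_def
proof (intro conjI ballI)
  show "lin_map A X X (\<lambda>x. inv_into (mcarrier X) e (\<rho> (e x)))"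
    using \<rho> lin_map_pullback[OF _ e e X X] by (simp add: lin_retraction_def)
next
  fix x assume "x \<in> mcarrier X"
  then obtain z where "z \<in> C" "\<rho> (e x) = e z"
    using \<rho> by (auto simp: lin_retraction_def map_rmod_carrier[OF e])
  then show "inv_into (mcarrier X) e (\<rho> (e x)) \<in> C"
    using C map_rmod_inv[OF e] by auto
next
  fix z assume "z \<in> C"
  then show "inv_into (mcarrier X) e (\<rho> (e z)) = z"
    using \<rho> C map_rmod_inv[OF e] by (auto simp: lin_retraction_def)
qed

definition compl_proj :: "('r, 'm) rmod \<Rightarrow> ('m \<Rightarrow> 'm) \<Rightarrow> 'm \<Rightarrow> 'm" where
  "compl_proj X \<rho> x = msub X x (\<rho> x)"

context
  fixes A :: "('r, 'a) ring_scheme" and X :: "('r, 'm) rmod" and C :: "'m set" and \<rho> :: "'m \<Rightarrow> 'm"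
  assumes \<rho>: "lin_retraction A X C \<rho>"
begin

lemma lin_retraction_lin: "lin_map A X X \<rho>"
  using \<rho> by (simp add: lin_retraction_def)

lemma lin_retraction_idem: "x \<in> mcarrier X \<Longrightarrow> \<rho> (\<rho> x) = \<rho> x"
  using \<rho> by (simp add: lin_retraction_def)

lemma lin_map_compl_proj: "lin_map A X X (compl_proj X \<rho>)"
  unfolding compl_proj_def
  by (rule lin_map_diff[OF lin_map_id[OF lin_mapD(1)[OF lin_retraction_lin]] lin_retraction_lin])

lemma retraction_compl_proj: "x \<in> mcarrier X \<Longrightarrow> \<rho> (compl_proj X \<rho> x) = mzero X"
  using lin_map_msub[OF lin_retraction_lin] lin_mapD(2,3)[OF lin_retraction_lin]
  by (simp add: compl_proj_def lin_retraction_idem)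

lemma compl_proj_idem: "x \<in> mcarrier X \<Longrightarrow> compl_proj X \<rho> (compl_proj X \<rho> x) = compl_proj X \<rho> x"
  using retraction_compl_proj lin_mapD(2,3)[OF lin_map_compl_proj]
  by (simp add: compl_proj_def[of X \<rho> "compl_proj X \<rho> x"])

lemma compl_proj_image_inter: "compl_proj X \<rho> ` mcarrier X \<inter> C = {mzero X}"
proof -
  note lin = lin_mapD[OF lin_retraction_lin]
  have "mzero X \<in> compl_proj X \<rho> ` mcarrier X"
    using lin_map_zero[OF lin_map_compl_proj] mzero_closed[OF lin(1)] by (metis image_eqI)
  moreover have "mzero X \<in> C"
    using \<rho> lin_map_zero[OF lin_retraction_lin] mzero_closed[OF lin(1)]
    unfolding lin_retraction_def by metis
  moreover have "z = mzero X" if "z \<in> compl_proj X \<rho> ` mcarrier X" "z \<in> C" for z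
    using that retraction_compl_proj \<rho> unfolding lin_retraction_def by auto
  ultimately show ?thesis
    by blast
qed

lemma image_compl_proj:
  assumes g: "lin_map A X Y g" and C: "C \<subseteq> mker X Y g"
  shows "g ` compl_proj X \<rho> ` mcarrier X = g ` mcarrier X"
proof -
  have "g (compl_proj X \<rho> x) = g x" if x: "x \<in> mcarrier X" for x
  proof -
    have "\<rho> x \<in> C"
      using \<rho> x by (simp add: lin_retraction_def)
    then have "g (\<rho> x) = mzero Y"
      using C by (auto simp: mker_def)
    then show ?thesis
      using lin_map_msub[OF g x] lin_mapD(2,3)[OF g] lin_mapD(3)[OF lin_retraction_lin] x
      by (simp add: compl_proj_def)
  qed
  then show ?thesis
    by (force simp: image_iff)
qed

end

lemma res_kernel_update_carrier:
  assumes "K \<subseteq> mcarrier (P i)"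
  shows "res_kernel X (P(i := (P i)\<lparr>mcarrier := K\<rparr>)) d e j =
         (if j = i then K \<inter> res_kernel X P d e i else res_kernel X P d e j)"
  using assms by (cases j) (auto simp: mker_def)

lemma resolution_restrict_top:
  fixes A :: "('r, 'a) ring_scheme" and P :: "nat \<Rightarrow> ('r, 'q) rmod"
  assumes P: "proj_resolution A X n P d e" and i: "i < n"
    and K: "K \<subseteq> mcarrier (P i)" "projective A ((P i)\<lparr>mcarrier := K\<rparr>)"
    and K_kernel: "K \<inter> res_kernel X P d e i = {mzero (P i)}"
    and image_0: "i = 0 \<Longrightarrow> e ` K = e ` mcarrier (P 0)"
    and image_Suc: "\<And>j. i = Suc j \<Longrightarrow> d j ` K = d j ` mcarrier (P i)"
  shows "proj_resolution A X i (P(i := (P i)\<lparr>mcarrier := K\<rparr>)) d e"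
proof -
  let ?P' = "P(i := (P i)\<lparr>mcarrier := K\<rparr>)"
  have Kmod: "right_module A ((P i)\<lparr>mcarrier := K\<rparr>)"
    using K(2) by (rule projective_right_module)
  show ?thesis
    unfolding proj_resolution_iff
  proof (intro conjI allI impI)
    fix k assume "k \<le> i"
    then show "projective A (?P' k)"
      using K(2) resolution_projective[OF P] i by simp
  next
    show "lin_map A (?P' 0) X e"
      using lin_map_restrict[OF resolution_augmentation[OF P], of K] Kmod K(1) resolution_augmentation[OF P]
      by (cases i) simp_all
  next
    show "e ` mcarrier (?P' 0) = mcarrier X"
      using image_0 resolution_augmentation_onto[OF P] by (cases i) simp_all
  next
    fix k assume k: "k < i"
    show "lin_map A (?P' (Suc k)) (?P' k) (d k)"
      using lin_map_restrict[OF resolution_differential[OF P], of k K] Kmod K(1)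
        resolution_differential[OF P, of k] k i
      by (cases "Suc k = i") auto
  next
    fix k assume k: "k \<le> i"
    have res_kernel': "res_kernel X ?P' d e k = (if k = i then K \<inter> res_kernel X P d e i else res_kernel X P d e k)"
      by (rule res_kernel_update_carrier[of K P i, OF K(1)])
    show "res_kernel X ?P' d e k = (if k < i then d k ` mcarrier (?P' (Suc k)) else {mzero (?P' k)})"
      using res_kernel' K_kernel image_Suc[of k] resolution_exact[OF P, of k] k i
      by (cases "k = i"; cases "Suc k = i") auto
  qed
qed

lemma resolution_shorten:
  fixes A :: "('r, 'a) ring_scheme" and P :: "nat \<Rightarrow> ('r, 'q) rmod"
  assumes P: "proj_resolution A X n P d e" and i: "i < n"
    and \<rho>: "lin_retraction A (P i) (res_kernel X P d e i) \<rho>"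
  shows "proj_resolution A X i (P(i := (P i)\<lparr>mcarrier := compl_proj (P i) \<rho> ` mcarrier (P i)\<rparr>)) d e"
proof (rule resolution_restrict_top[OF P i])
  show "compl_proj (P i) \<rho> ` mcarrier (P i) \<subseteq> mcarrier (P i)"
    using lin_mapD(3)[OF lin_map_compl_proj[OF \<rho>]] by auto
  show "projective A ((P i)\<lparr>mcarrier := compl_proj (P i) \<rho> ` mcarrier (P i)\<rparr>)"
    using projective_idempotent_image[OF resolution_projective[OF P]
        lin_map_compl_proj[OF \<rho>] compl_proj_idem[OF \<rho>]] i by simp
  show "compl_proj (P i) \<rho> ` mcarrier (P i) \<inter> res_kernel X P d e i = {mzero (P i)}"
    by (rule compl_proj_image_inter[OF \<rho>])
  show "e ` compl_proj (P i) \<rho> ` mcarrier (P i) = e ` mcarrier (P 0)" if "i = 0"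
    using image_compl_proj[OF \<rho>, of X e] resolution_augmentation[OF P] that by simp
  show "d j ` compl_proj (P i) \<rho> ` mcarrier (P i) = d j ` mcarrier (P i)" if "i = Suc j" for j
    using image_compl_proj[OF \<rho>, of "P j" "d j"] resolution_differential[OF P, of j] that i by simp
qed

lemma pdim_eq_enatI:
  assumes "pdim_le A X n" and "\<And>k. pdim_le A X k \<Longrightarrow> n \<le> k"
  shows "pdim A X = enat n"
  unfolding pdim_def
proof (rule antisym)
  show "Inf {enat n |n. pdim_le A X n} \<le> enat n"
    by (rule Inf_lower) (use assms(1) in blast)
  show "enat n \<le> Inf {enat n |n. pdim_le A X n}"
    by (rule Inf_greatest) (use assms(2) in auto)
qed

lemma pdim_finiteE:
  assumes "pdim A X < \<infinity>"
  obtains n where "pdim A X = enat n" "pdim_le A X n" "\<And>k. pdim_le A X k \<Longrightarrow> n \<le> k"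
proof -
  let ?S = "{enat n |n. pdim_le A X n}"
  have "?S \<noteq> {}"
  proof
    assume "?S = {}"
    then have "pdim A X = \<infinity>"
      unfolding pdim_def by (metis Inf_empty top_enat_def)
    with assms show False
      by simp
  qed
  then have "pdim A X \<in> ?S"
    unfolding pdim_def Inf_enat_def by (auto intro: LeastI)
  then obtain n where n: "pdim A X = enat n" "pdim_le A X n"
    by blast
  moreover have "n \<le> k" if "pdim_le A X k" for k
    using Inf_lower[of "enat k" ?S] that n(1) by (auto simp: pdim_def)
  ultimately show ?thesis
    using that by blast
qed

lemma pdim_le_fpdim:
  fixes A :: "('l, 'b) ring_scheme" and X :: "('l, 'l list set) rmod"
  assumes "fin_gen A X" and "pdim A X < \<infinity>"
  shows "pdim A X \<le> fpdim A"
  unfolding fpdim_def by (rule Sup_upper) (use assms in blast)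

section \<open>The triangular matrix ring\<close>

definition lift_R :: "('r, 'q) rmod \<Rightarrow> ('r \<times> 'm \<times> 's, 'q) rmod" where
  "lift_R X = \<lparr>mcarrier = mcarrier X, mzero = mzero X, madd = madd X, mact = (\<lambda>x l. mact X x (fst l))\<rparr>"

lemma lift_R_simps [simp]:
  "mcarrier (lift_R X) = mcarrier X" "mzero (lift_R X) = mzero X"
  "madd (lift_R X) = madd X" "mact (lift_R X) x l = mact X x (fst l)"
  by (simp_all add: lift_R_def)

lemma add_group_lift_R: "add_group (lift_R X) = add_group X"
  by (simp add: add_group_def)

lemma msum_lift_R [simp]: "msum (lift_R X) f F = msum X f F"
  by (simp add: msum_def add_group_lift_R)

lemma mker_lift_R [simp]: "mker (lift_R X) (lift_R Y) f = mker X Y f"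
  by (simp add: mker_def)

text \<open>\<open>pdim_le\<close> and \<open>fpdim\<close> fix the carrier types of the modules they quantify over.\<close>

definition enc_S :: "'s \<Rightarrow> ('r \<times> 'm \<times> 's) list set" where
  "enc_S s = {[(undefined, undefined, s)]}"

definition enc_E :: "'l \<Rightarrow> ('l list set \<times> 'l \<times> nat \<Rightarrow> 'l)" where
  "enc_E x = (\<lambda>_. x)"

definition enc_P :: "('m \<times> 'r \<times> nat \<Rightarrow> 'r)
                     \<Rightarrow> (('r \<times> 'm \<times> 's) list set \<times> ('r \<times> 'm \<times> 's) \<times> nat \<Rightarrow> 'r \<times> 'm \<times> 's)" where
  "enc_P f = (\<lambda>(X, l, j). (f (fst (snd l), fst l, j), undefined, undefined))"

lemma inj_enc_S: "inj_on enc_S A"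
  by (auto simp: inj_on_def enc_S_def)

lemma inj_enc_E: "inj_on enc_E A"
  by (auto simp: inj_on_def enc_E_def fun_eq_iff)

lemma inj_enc_P: "inj_on enc_P A"
proof (rule inj_onI)
  fix f g :: "'m \<times> 'r \<times> nat \<Rightarrow> 'r"
  assume "(enc_P f :: ('r \<times> 'm \<times> 's) list set \<times> ('r \<times> 'm \<times> 's) \<times> nat \<Rightarrow> 'r \<times> 'm \<times> 's) = enc_P g"
  then have "fst (enc_P f (X, (r, m, s), j) :: 'r \<times> 'm \<times> 's) = fst (enc_P g (X, (r, m, s), j) :: 'r \<times> 'm \<times> 's)"
    for X r m s j
    by simp
  then show "f = g"
    by (auto simp: enc_P_def fun_eq_iff)
qed

lemmas map_rmod_enc_simps [simp] =
  map_rmod_carrier[OF inj_enc_S] map_rmod_carrier[OF inj_enc_E] map_rmod_carrier[OF inj_enc_P]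
  map_rmod_zero[OF inj_enc_S] map_rmod_zero[OF inj_enc_E] map_rmod_zero[OF inj_enc_P]

locale triangular =
  fixes R :: "('r, 'a) ring_scheme" and S :: "('s, 'b) ring_scheme" and M :: "('r, 'm) rmod"
    and L :: "'s \<Rightarrow> 'm \<Rightarrow> 'm"
  assumes R: "ring R" and S: "ring S" and bimod: "bimodule S R M L"
begin

sublocale R: ring R by (rule R)
sublocale S: ring S by (rule S)

lemma right_module_M: "right_module R M"
  using bimod by (simp add: bimodule_def)

lemmas M_simps [simp] = mzero_closed[OF right_module_M] madd_closed[OF right_module_M]
  mact_closed[OF right_module_M] mneg_closed[OF right_module_M] madd_zero_left[OF right_module_M]
  madd_zero_right[OF right_module_M] madd_mneg_left[OF right_module_M] mact_zero[OF right_module_M]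
  mzero_mact[OF right_module_M] mact_one[OF right_module_M]

lemma L_closed [simp]: "s \<in> carrier S \<Longrightarrow> x \<in> mcarrier M \<Longrightarrow> L s x \<in> mcarrier M"
  using bimod by (simp add: bimodule_def)

lemma L_add_left:
  "s \<in> carrier S \<Longrightarrow> t \<in> carrier S \<Longrightarrow> x \<in> mcarrier M \<Longrightarrow> L (s \<oplus>\<^bsub>S\<^esub> t) x = madd M (L s x) (L t x)"
  using bimod by (simp add: bimodule_def)

lemma L_add_right:
  "s \<in> carrier S \<Longrightarrow> x \<in> mcarrier M \<Longrightarrow> y \<in> mcarrier M \<Longrightarrow> L s (madd M x y) = madd M (L s x) (L s y)"
  using bimod by (simp add: bimodule_def)

lemma L_mult: "s \<in> carrier S \<Longrightarrow> t \<in> carrier S \<Longrightarrow> x \<in> mcarrier M \<Longrightarrow> L (s \<otimes>\<^bsub>S\<^esub> t) x = L s (L t x)"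
  using bimod by (simp add: bimodule_def)

lemma L_one [simp]: "x \<in> mcarrier M \<Longrightarrow> L \<one>\<^bsub>S\<^esub> x = x"
  using bimod by (simp add: bimodule_def)

lemma L_mact:
  "s \<in> carrier S \<Longrightarrow> x \<in> mcarrier M \<Longrightarrow> r \<in> carrier R \<Longrightarrow> mact M (L s x) r = L s (mact M x r)"
  using bimod by (simp add: bimodule_def)

lemma L_zero_left [simp]: "x \<in> mcarrier M \<Longrightarrow> L \<zero>\<^bsub>S\<^esub> x = mzero M"
  using L_add_left[of "\<zero>\<^bsub>S\<^esub>" "\<zero>\<^bsub>S\<^esub>" x] madd_self_eq_iff[OF right_module_M, of "L \<zero>\<^bsub>S\<^esub> x"] by simp

lemma L_zero_right [simp]: "s \<in> carrier S \<Longrightarrow> L s (mzero M) = mzero M"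
  using L_add_right[of s "mzero M" "mzero M"] madd_self_eq_iff[OF right_module_M, of "L s (mzero M)"] by simp

abbreviation Lam :: "('r \<times> 'm \<times> 's) ring" where
  "Lam \<equiv> tri_ring R S M L"

lemma Lam_carrier [simp]: "(r, m, s) \<in> carrier Lam \<longleftrightarrow> r \<in> carrier R \<and> m \<in> mcarrier M \<and> s \<in> carrier S"
  by (simp add: tri_ring_def)

lemma Lam_mult [simp]:
  "(r, m, s) \<otimes>\<^bsub>Lam\<^esub> (r', m', s') = (r \<otimes>\<^bsub>R\<^esub> r', madd M (mact M m r') (L s m'), s \<otimes>\<^bsub>S\<^esub> s')"
  by (simp add: tri_ring_def)

lemma Lam_add [simp]: "(r, m, s) \<oplus>\<^bsub>Lam\<^esub> (r', m', s') = (r \<oplus>\<^bsub>R\<^esub> r', madd M m m', s \<oplus>\<^bsub>S\<^esub> s')"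
  by (simp add: tri_ring_def)

lemma Lam_one: "\<one>\<^bsub>Lam\<^esub> = (\<one>\<^bsub>R\<^esub>, mzero M, \<one>\<^bsub>S\<^esub>)"
  by (simp add: tri_ring_def)

lemma Lam_zero: "\<zero>\<^bsub>Lam\<^esub> = (\<zero>\<^bsub>R\<^esub>, mzero M, \<zero>\<^bsub>S\<^esub>)"
  by (simp add: tri_ring_def)

lemma abelian_group_Lam: "abelian_group Lam"
proof (rule abelian_groupI)
  fix x y z
  assume "x \<in> carrier Lam" "y \<in> carrier Lam" "z \<in> carrier Lam"
  then show "x \<oplus>\<^bsub>Lam\<^esub> y \<oplus>\<^bsub>Lam\<^esub> z = x \<oplus>\<^bsub>Lam\<^esub> (y \<oplus>\<^bsub>Lam\<^esub> z)"
    by (cases x rule: prod_cases3; cases y rule: prod_cases3; cases z rule: prod_cases3)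
      (simp add: R.a_assoc S.a_assoc madd_assoc[OF right_module_M])
next
  fix x y
  assume "x \<in> carrier Lam" "y \<in> carrier Lam"
  then show "x \<oplus>\<^bsub>Lam\<^esub> y \<in> carrier Lam" "x \<oplus>\<^bsub>Lam\<^esub> y = y \<oplus>\<^bsub>Lam\<^esub> x"
    by (cases x rule: prod_cases3; cases y rule: prod_cases3;
        simp add: R.a_comm S.a_comm madd_comm[OF right_module_M])+
next
  fix x
  assume x: "x \<in> carrier Lam"
  then show "\<zero>\<^bsub>Lam\<^esub> \<oplus>\<^bsub>Lam\<^esub> x = x"
    by (cases x rule: prod_cases3) (simp add: Lam_zero)
  show "\<exists>y\<in>carrier Lam. y \<oplus>\<^bsub>Lam\<^esub> x = \<zero>\<^bsub>Lam\<^esub>"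
  proof (cases x rule: prod_cases3)
    case (fields r m s)
    then show ?thesis
      using x by (intro bexI[of _ "(\<ominus>\<^bsub>R\<^esub> r, mneg M m, \<ominus>\<^bsub>S\<^esub> s)"]) (auto simp: Lam_zero R.l_neg S.l_neg)
  qed
qed (simp add: Lam_zero)

lemma monoid_Lam: "monoid Lam"
proof (rule monoidI)
  fix x y z
  assume "x \<in> carrier Lam" "y \<in> carrier Lam" "z \<in> carrier Lam"
  then show "x \<otimes>\<^bsub>Lam\<^esub> y \<otimes>\<^bsub>Lam\<^esub> z = x \<otimes>\<^bsub>Lam\<^esub> (y \<otimes>\<^bsub>Lam\<^esub> z)"
    by (cases x rule: prod_cases3; cases y rule: prod_cases3; cases z rule: prod_cases3)
      (simp add: R.m_assoc S.m_assoc madd_assoc[OF right_module_M] mact_l_distr[OF right_module_M]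
         mact_assoc[OF right_module_M] L_add_right L_mult L_mact)
next
  fix x y
  assume "x \<in> carrier Lam" "y \<in> carrier Lam"
  then show "x \<otimes>\<^bsub>Lam\<^esub> y \<in> carrier Lam"
    by (cases x rule: prod_cases3; cases y rule: prod_cases3) simp
next
  fix x
  assume "x \<in> carrier Lam"
  then show "\<one>\<^bsub>Lam\<^esub> \<otimes>\<^bsub>Lam\<^esub> x = x" "x \<otimes>\<^bsub>Lam\<^esub> \<one>\<^bsub>Lam\<^esub> = x"
    by (cases x rule: prod_cases3; simp add: Lam_one)+
qed (simp add: Lam_one)

lemma ring_Lam: "ring Lam"
proof (rule ringI[OF abelian_group_Lam monoid_Lam])
  fix x y z
  assume "x \<in> carrier Lam" "y \<in> carrier Lam" "z \<in> carrier Lam"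
  then show "(x \<oplus>\<^bsub>Lam\<^esub> y) \<otimes>\<^bsub>Lam\<^esub> z = x \<otimes>\<^bsub>Lam\<^esub> z \<oplus>\<^bsub>Lam\<^esub> y \<otimes>\<^bsub>Lam\<^esub> z"
    "z \<otimes>\<^bsub>Lam\<^esub> (x \<oplus>\<^bsub>Lam\<^esub> y) = z \<otimes>\<^bsub>Lam\<^esub> x \<oplus>\<^bsub>Lam\<^esub> z \<otimes>\<^bsub>Lam\<^esub> y"
    by (cases x rule: prod_cases3; cases y rule: prod_cases3; cases z rule: prod_cases3;
        simp add: R.l_distr S.l_distr R.r_distr S.r_distr mact_l_distr[OF right_module_M]
          mact_r_distr[OF right_module_M] L_add_left L_add_right madd_swap[OF right_module_M])+
qed

sublocale Lam: ring Lam by (rule ring_Lam)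

lemma fst_Lam_closed: "x \<in> carrier Lam \<Longrightarrow> fst x \<in> carrier R"
  by (cases x rule: prod_cases3) simp

lemma fst_Lam_add: "x \<in> carrier Lam \<Longrightarrow> y \<in> carrier Lam \<Longrightarrow> fst (x \<oplus>\<^bsub>Lam\<^esub> y) = fst x \<oplus>\<^bsub>R\<^esub> fst y"
  by (cases x rule: prod_cases3; cases y rule: prod_cases3) simp

lemma fst_Lam_mult: "x \<in> carrier Lam \<Longrightarrow> y \<in> carrier Lam \<Longrightarrow> fst (x \<otimes>\<^bsub>Lam\<^esub> y) = fst x \<otimes>\<^bsub>R\<^esub> fst y"
  by (cases x rule: prod_cases3; cases y rule: prod_cases3) simp

lemma right_module_lift_R:
  assumes X: "right_module R X"
  shows "right_module Lam (lift_R X)"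
  using X ring_Lam unfolding right_module_def[of Lam "lift_R X"]
  by (auto simp: add_group_lift_R right_module_add_group fst_Lam_mult fst_Lam_add fst_Lam_closed Lam_one
      mact_r_distr[OF X] mact_l_distr[OF X] mact_assoc[OF X])

lemma lin_map_lift_R: "lin_map R X Y f \<Longrightarrow> lin_map Lam (lift_R X) (lift_R Y) f"
  using lin_mapD[of R X Y f] by (intro lin_mapI right_module_lift_R) (auto simp: fst_Lam_closed)

lemma lin_map_lift_R_iff:
  assumes "right_module R X" "right_module R Y"
  shows "lin_map Lam (lift_R X) (lift_R Y) f \<longleftrightarrow> lin_map R X Y f"
proof
  assume f: "lin_map Lam (lift_R X) (lift_R Y) f"
  show "lin_map R X Y f"
  proof (rule lin_mapI[OF assms])
    fix x r assume "x \<in> mcarrier X" "r \<in> carrier R"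
    then show "f (mact X x r) = mact Y (f x) r"
      using lin_mapD(5)[OF f, of x "(r, mzero M, \<zero>\<^bsub>S\<^esub>)"] by simp
  qed (use lin_mapD[OF f] in auto)
qed (rule lin_map_lift_R)

lemma dual_basis_lift_R:
  assumes X: "right_module R X" and db: "dual_basis R X I b \<phi>"
  shows "dual_basis Lam (lift_R X) I b (\<lambda>i v. (\<phi> i v, mzero M, \<zero>\<^bsub>S\<^esub>))"
  unfolding dual_basis_def
proof (intro conjI ballI)
  fix v assume "v \<in> mcarrier (lift_R X)"
  then obtain F where "finite F" "F \<subseteq> I" "\<forall>i\<in>I - F. \<phi> i v = \<zero>\<^bsub>R\<^esub>"
    "v = msum X (\<lambda>i. mact X (b i) (\<phi> i v)) F"
    using db unfolding dual_basis_def by auto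
  then show "\<exists>F. finite F \<and> F \<subseteq> I \<and> (\<forall>i\<in>I - F. (\<phi> i v, mzero M, \<zero>\<^bsub>S\<^esub>) = \<zero>\<^bsub>Lam\<^esub>) \<and>
      v = msum (lift_R X) (\<lambda>i. mact (lift_R X) (b i) (\<phi> i v, mzero M, \<zero>\<^bsub>S\<^esub>)) F"
    by (intro exI[of _ F]) (auto simp: Lam_zero)
next
  fix i v a assume "i \<in> I" "v \<in> mcarrier (lift_R X)" "a \<in> carrier Lam"
  then show "(\<phi> i (mact (lift_R X) v a), mzero M, \<zero>\<^bsub>S\<^esub>) = (\<phi> i v, mzero M, \<zero>\<^bsub>S\<^esub>) \<otimes>\<^bsub>Lam\<^esub> a"
    using dual_basis_coord_mact[OF X db] fst_Lam_closed by (cases a rule: prod_cases3) auto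
qed (use dual_basis_closed[OF X db] dual_basis_coord_closed[OF X db] dual_basis_coord_madd[OF X db] in auto)

lemma projective_lift_R: "projective R X \<Longrightarrow> projective Lam (lift_R X)"
  by (metis projective_dual_basis projective_if_dual_basis right_module_lift_R dual_basis_lift_R
      projective_right_module)

lemma lin_retraction_lift_R:
  assumes "lin_retraction Lam (lift_R X) C \<rho>" and "right_module R X"
  shows "lin_retraction R X C \<rho>"
  using assms lin_map_lift_R_iff[OF assms(2) assms(2)] by (simp add: lin_retraction_def)

definition e2 :: "'r \<times> 'm \<times> 's" where
  "e2 = (\<zero>\<^bsub>R\<^esub>, mzero M, \<one>\<^bsub>S\<^esub>)"

definition E_mod :: "('r \<times> 'm \<times> 's, 'r \<times> 'm \<times> 's) rmod" where
  "E_mod = (regular_rmod Lam)\<lparr>mcarrier := {\<zero>\<^bsub>R\<^esub>} \<times> mcarrier M \<times> carrier S\<rparr>"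

definition S_mod :: "('r \<times> 'm \<times> 's, 's) rmod" where
  "S_mod = \<lparr>mcarrier = carrier S, mzero = \<zero>\<^bsub>S\<^esub>, madd = add S, mact = (\<lambda>t l. t \<otimes>\<^bsub>S\<^esub> snd (snd l))\<rparr>"

definition E_to_S :: "'r \<times> 'm \<times> 's \<Rightarrow> 's" where
  "E_to_S l = snd (snd l)"

definition embed_E :: "('q \<Rightarrow> 'm) \<Rightarrow> 'q \<Rightarrow> 'r \<times> 'm \<times> 's" where
  "embed_E \<epsilon> x = (\<zero>\<^bsub>R\<^esub>, \<epsilon> x, \<zero>\<^bsub>S\<^esub>)"

lemma E_mod_simps [simp]:
  "mcarrier E_mod = {\<zero>\<^bsub>R\<^esub>} \<times> mcarrier M \<times> carrier S" "mzero E_mod = \<zero>\<^bsub>Lam\<^esub>"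
  "madd E_mod = add Lam" "mact E_mod = mult Lam"
  by (simp_all add: E_mod_def regular_rmod_def)

lemma S_mod_simps [simp]: "mcarrier S_mod = carrier S" "mzero S_mod = \<zero>\<^bsub>S\<^esub>"
  by (simp_all add: S_mod_def)

lemma right_module_E_mod: "right_module Lam E_mod"
  unfolding E_mod_def
proof (rule right_module_restrict[OF right_module_regular_rmod[OF ring_Lam]])
  fix x r assume "x \<in> {\<zero>\<^bsub>R\<^esub>} \<times> mcarrier M \<times> carrier S" "r \<in> carrier Lam"
  then show "mact (regular_rmod Lam) x r \<in> {\<zero>\<^bsub>R\<^esub>} \<times> mcarrier M \<times> carrier S"
    by (cases r rule: prod_cases3) (auto simp: regular_rmod_def)
qed (auto simp: regular_rmod_def tri_ring_def)

lemma projective_E_mod: "projective Lam E_mod"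
proof -
  have "dual_basis Lam E_mod {()} (\<lambda>_. e2) (\<lambda>_ v. v)"
    unfolding dual_basis_def
  proof (intro conjI ballI)
    fix v assume v: "v \<in> mcarrier E_mod"
    then have "mact E_mod e2 v = v" "mact E_mod e2 v \<in> mcarrier E_mod"
      by (auto simp: e2_def)
    then show "\<exists>F. finite F \<and> F \<subseteq> {()} \<and> (\<forall>i\<in>{()} - F. v = \<zero>\<^bsub>Lam\<^esub>) \<and>
        v = msum E_mod (\<lambda>i. mact E_mod e2 v) F"
      using msum_singleton[OF right_module_E_mod, of "\<lambda>i. mact E_mod e2 v" "()"]
      by (intro exI[of _ "{()}"]) auto
  qed (auto simp: e2_def Lam.m_closed)
  then show ?thesis
    by (rule projective_if_dual_basis[OF right_module_E_mod])
qed

lemma snd_snd_Lam_closed: "x \<in> carrier Lam \<Longrightarrow> snd (snd x) \<in> carrier S"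
  by (cases x rule: prod_cases3) simp

lemma snd_snd_Lam_add:
  "x \<in> carrier Lam \<Longrightarrow> y \<in> carrier Lam \<Longrightarrow> snd (snd (x \<oplus>\<^bsub>Lam\<^esub> y)) = snd (snd x) \<oplus>\<^bsub>S\<^esub> snd (snd y)"
  by (cases x rule: prod_cases3; cases y rule: prod_cases3) simp

lemma snd_snd_Lam_mult:
  "x \<in> carrier Lam \<Longrightarrow> y \<in> carrier Lam \<Longrightarrow> snd (snd (x \<otimes>\<^bsub>Lam\<^esub> y)) = snd (snd x) \<otimes>\<^bsub>S\<^esub> snd (snd y)"
  by (cases x rule: prod_cases3; cases y rule: prod_cases3) simp

lemma right_module_S_mod: "right_module Lam S_mod"
proof -
  have "add_group S_mod = \<lparr>carrier = carrier S, mult = add S, one = \<zero>\<^bsub>S\<^esub>\<rparr>"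
    by (simp add: add_group_def S_mod_def)
  then have "comm_group (add_group S_mod)"
    using comm_group_add_of_ring[OF S] by simp
  then show ?thesis
    unfolding right_module_def
    by (auto simp: S_mod_def ring_Lam snd_snd_Lam_add snd_snd_Lam_mult snd_snd_Lam_closed Lam_one
        S.r_distr S.l_distr S.m_assoc)
qed

lemma lin_map_E_to_S: "lin_map Lam E_mod S_mod E_to_S"
  by (rule lin_mapI[OF right_module_E_mod right_module_S_mod])
    (auto simp: E_to_S_def S_mod_def snd_snd_Lam_mult snd_snd_Lam_add)

lemma E_to_S_onto: "E_to_S ` mcarrier E_mod = carrier S"
proof
  show "carrier S \<subseteq> E_to_S ` mcarrier E_mod"
  proof
    fix s assume "s \<in> carrier S"
    then have "(\<zero>\<^bsub>R\<^esub>, mzero M, s) \<in> mcarrier E_mod"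
      by simp
    then show "s \<in> E_to_S ` mcarrier E_mod"
      by (rule rev_image_eqI) (simp add: E_to_S_def)
  qed
qed (auto simp: E_to_S_def)

lemma mker_E_to_S: "mker E_mod S_mod E_to_S = {\<zero>\<^bsub>R\<^esub>} \<times> mcarrier M \<times> {\<zero>\<^bsub>S\<^esub>}"
  by (auto simp: mker_def E_to_S_def)

lemma lin_map_embed_E:
  assumes \<epsilon>: "lin_map R X M \<epsilon>"
  shows "lin_map Lam (lift_R X) E_mod (embed_E \<epsilon>)"
proof (rule lin_mapI[OF right_module_lift_R[OF lin_mapD(1)[OF \<epsilon>]] right_module_E_mod])
  fix x a assume "x \<in> mcarrier (lift_R X)" "a \<in> carrier Lam"
  then show "embed_E \<epsilon> (mact (lift_R X) x a) = mact E_mod (embed_E \<epsilon> x) a"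
    using lin_mapD[OF \<epsilon>] by (cases a rule: prod_cases3) (simp add: embed_E_def)
qed (use lin_mapD[OF \<epsilon>] in \<open>simp_all add: embed_E_def\<close>)

lemma mker_embed_E: "mker (lift_R X) E_mod (embed_E \<epsilon>) = mker X M \<epsilon>"
  by (auto simp: mker_def embed_E_def Lam_zero)

lemma image_embed_E: "embed_E \<epsilon> ` C = {\<zero>\<^bsub>R\<^esub>} \<times> \<epsilon> ` C \<times> {\<zero>\<^bsub>S\<^esub>}"
  by (auto simp: embed_E_def)

text \<open>Since \<open>e2\<close> generates \<open>E_mod\<close>, a retraction is determined by \<open>\<rho> e2 \<in> 0 \<times> M \<times> 0\<close>;
  but \<open>0 \<times> M \<times> 0\<close> squares to zero in \<open>\<Lambda>\<close>.\<close>

lemma no_retraction_onto_M: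
  assumes "mcarrier M \<noteq> {mzero M}"
  shows "\<not> lin_retraction Lam E_mod ({\<zero>\<^bsub>R\<^esub>} \<times> mcarrier M \<times> {\<zero>\<^bsub>S\<^esub>}) \<rho>"
proof
  assume \<rho>: "lin_retraction Lam E_mod ({\<zero>\<^bsub>R\<^esub>} \<times> mcarrier M \<times> {\<zero>\<^bsub>S\<^esub>}) \<rho>"
  obtain m where m: "m \<in> mcarrier M" "m \<noteq> mzero M"
    using assms mzero_closed[OF right_module_M] by blast
  let ?z = "(\<zero>\<^bsub>R\<^esub>, m, \<zero>\<^bsub>S\<^esub>)"
  have e2: "e2 \<in> mcarrier E_mod"
    by (simp add: e2_def)
  have "\<rho> e2 \<in> {\<zero>\<^bsub>R\<^esub>} \<times> mcarrier M \<times> {\<zero>\<^bsub>S\<^esub>}"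
    using \<rho> e2 unfolding lin_retraction_def by blast
  then obtain \<mu> where \<mu>: "\<rho> e2 = (\<zero>\<^bsub>R\<^esub>, \<mu>, \<zero>\<^bsub>S\<^esub>)" "\<mu> \<in> mcarrier M"
    by blast
  have "?z = \<rho> (mact E_mod e2 ?z)"
    using \<rho> m by (simp add: lin_retraction_def e2_def)
  also have "\<dots> = mact E_mod (\<rho> e2) ?z"
    using lin_mapD(5)[OF lin_retraction_lin[OF \<rho>] e2, of ?z] m by simp
  also have "\<dots> = (\<zero>\<^bsub>R\<^esub>, mzero M, \<zero>\<^bsub>S\<^esub>)"
    using \<mu> m by simp
  finally show False
    using m by simp
qed

text \<open>\<open>T_res P\<close> is \<open>\<dots> \<rightarrow> P 1 \<rightarrow> P 0 \<rightarrow> E_mod\<close>, resolving \<open>T_mod\<close>, a copy of \<open>S_mod\<close>; the map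
  \<open>P 0 \<rightarrow> E_mod\<close> is the augmentation of \<open>P\<close> followed by \<open>M \<cong> 0 \<times> M \<times> 0\<close>.\<close>

definition T_mod :: "('r \<times> 'm \<times> 's, ('r \<times> 'm \<times> 's) list set) rmod" where
  "T_mod = map_rmod enc_S S_mod"

definition T_res :: "(nat \<Rightarrow> ('r, 'm \<times> 'r \<times> nat \<Rightarrow> 'r) rmod) \<Rightarrow> nat \<Rightarrow>
    ('r \<times> 'm \<times> 's, ('r \<times> 'm \<times> 's) list set \<times> ('r \<times> 'm \<times> 's) \<times> nat \<Rightarrow> 'r \<times> 'm \<times> 's) rmod" where
  "T_res P j = (case j of 0 \<Rightarrow> map_rmod enc_E E_mod | Suc i \<Rightarrow> map_rmod enc_P (lift_R (P i)))"

definition T_diff :: "(nat \<Rightarrow> ('r, 'm \<times> 'r \<times> nat \<Rightarrow> 'r) rmod) \<Rightarrow> (nat \<Rightarrow> ('m \<times> 'r \<times> nat \<Rightarrow> 'r) \<Rightarrow> 'm \<times> 'r \<times> nat \<Rightarrow> 'r)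
    \<Rightarrow> (('m \<times> 'r \<times> nat \<Rightarrow> 'r) \<Rightarrow> 'm) \<Rightarrow> nat
    \<Rightarrow> (('r \<times> 'm \<times> 's) list set \<times> ('r \<times> 'm \<times> 's) \<times> nat \<Rightarrow> 'r \<times> 'm \<times> 's)
    \<Rightarrow> (('r \<times> 'm \<times> 's) list set \<times> ('r \<times> 'm \<times> 's) \<times> nat \<Rightarrow> 'r \<times> 'm \<times> 's)" where
  "T_diff P d \<epsilon> j =
     (case j of 0 \<Rightarrow> map_lin (lift_R (P 0) :: ('r \<times> 'm \<times> 's, _) rmod) enc_P enc_E (embed_E \<epsilon>)
              | Suc i \<Rightarrow> map_lin (lift_R (P (Suc i)) :: ('r \<times> 'm \<times> 's, _) rmod) enc_P enc_P (d i))"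

definition T_aug :: "(('r \<times> 'm \<times> 's) list set \<times> ('r \<times> 'm \<times> 's) \<times> nat \<Rightarrow> 'r \<times> 'm \<times> 's)
                     \<Rightarrow> ('r \<times> 'm \<times> 's) list set" where
  "T_aug = map_lin E_mod enc_E enc_S E_to_S"

lemma T_res_0 [simp]: "T_res P 0 = map_rmod enc_E E_mod"
  by (simp add: T_res_def)

lemma T_res_Suc [simp]: "T_res P (Suc i) = map_rmod enc_P (lift_R (P i))"
  by (simp add: T_res_def)

lemma T_diff_0 [simp]:
  "T_diff P d \<epsilon> 0 = map_lin (lift_R (P 0) :: ('r \<times> 'm \<times> 's, _) rmod) enc_P enc_E (embed_E \<epsilon>)"
  by (simp add: T_diff_def)

lemma T_diff_Suc [simp]:
  "T_diff P d \<epsilon> (Suc i) = map_lin (lift_R (P (Suc i)) :: ('r \<times> 'm \<times> 's, _) rmod) enc_P enc_P (d i)"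
  by (simp add: T_diff_def)

lemma right_module_T_mod: "right_module Lam T_mod"
  unfolding T_mod_def by (rule right_module_map_rmod[OF inj_enc_S right_module_S_mod])

lemma fin_gen_T_mod: "fin_gen Lam T_mod"
  unfolding fin_gen_def
proof (intro conjI right_module_T_mod exI[of _ "{enc_S \<one>\<^bsub>S\<^esub>}"] ballI)
  fix x assume "x \<in> mcarrier T_mod"
  then obtain t where t: "t \<in> carrier S" "x = enc_S t"
    by (auto simp: T_mod_def)
  let ?c = "\<lambda>_. (\<zero>\<^bsub>R\<^esub>, mzero M, t)"
  have "mact T_mod (enc_S \<one>\<^bsub>S\<^esub>) (?c (enc_S \<one>\<^bsub>S\<^esub>)) = enc_S t"
    unfolding T_mod_def using t by (simp add: map_rmod_mact[OF inj_enc_S] S_mod_def)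
  moreover have "enc_S t \<in> mcarrier T_mod"
    using t by (simp add: T_mod_def)
  ultimately have "msum T_mod (\<lambda>g. mact T_mod g (?c g)) {enc_S \<one>\<^bsub>S\<^esub>} = enc_S t"
    using msum_singleton[OF right_module_T_mod, of "\<lambda>g. mact T_mod g (?c g)" "enc_S \<one>\<^bsub>S\<^esub>"] by simp
  then show "\<exists>c. (\<forall>g\<in>{enc_S \<one>\<^bsub>S\<^esub>}. c g \<in> carrier Lam) \<and> x = msum T_mod (\<lambda>g. mact T_mod g (c g)) {enc_S \<one>\<^bsub>S\<^esub>}"
    using t by (intro exI[of _ ?c]) auto
qed (auto simp: T_mod_def)

context
  fixes n :: nat and P :: "nat \<Rightarrow> ('r, 'm \<times> 'r \<times> nat \<Rightarrow> 'r) rmod"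
    and d :: "nat \<Rightarrow> ('m \<times> 'r \<times> nat \<Rightarrow> 'r) \<Rightarrow> 'm \<times> 'r \<times> nat \<Rightarrow> 'r" and \<epsilon> :: "('m \<times> 'r \<times> nat \<Rightarrow> 'r) \<Rightarrow> 'm"
  assumes P: "proj_resolution R M n P d \<epsilon>"
begin

lemma res_kernel_T_res_0:
  "res_kernel T_mod (T_res P) (T_diff P d \<epsilon>) T_aug 0 = enc_E ` ({\<zero>\<^bsub>R\<^esub>} \<times> mcarrier M \<times> {\<zero>\<^bsub>S\<^esub>})"
  unfolding T_mod_def T_aug_def
  using mker_map_lin[OF lin_map_E_to_S inj_enc_E inj_enc_S] mker_E_to_S by simp

lemma res_kernel_T_res_Suc:
  assumes "i \<le> n"
  shows "res_kernel T_mod (T_res P) (T_diff P d \<epsilon>) T_aug (Suc i) = enc_P ` res_kernel M P d \<epsilon> i"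
proof (cases i)
  case 0
  then show ?thesis
    using mker_map_lin[OF lin_map_embed_E[OF resolution_augmentation[OF P]] inj_enc_P inj_enc_E]
    by (simp add: mker_embed_E)
next
  case (Suc j)
  with assms have "j < n"
    by simp
  with Suc show ?thesis
    using mker_map_lin[OF lin_map_lift_R[OF resolution_differential[OF P]] inj_enc_P inj_enc_P] by simp
qed

lemma T_resolution: "proj_resolution Lam T_mod (Suc n) (T_res P) (T_diff P d \<epsilon>) T_aug"
  unfolding proj_resolution_iff
proof (intro conjI allI impI)
  fix k assume "k \<le> Suc n"
  then show "projective Lam (T_res P k)"
    using projective_map_rmod[OF inj_enc_E projective_E_mod]
      projective_map_rmod[OF inj_enc_P projective_lift_R[OF resolution_projective[OF P]]]
    by (cases k) auto
next
  show "lin_map Lam (T_res P 0) T_mod T_aug"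
    unfolding T_mod_def T_aug_def using lin_map_map_lin[OF lin_map_E_to_S inj_enc_E inj_enc_S] by simp
next
  show "T_aug ` mcarrier (T_res P 0) = mcarrier T_mod"
    unfolding T_mod_def T_aug_def using image_map_lin[OF inj_enc_E, of E_mod enc_S E_to_S] E_to_S_onto
    by simp
next
  fix k assume "k < Suc n"
  then show "lin_map Lam (T_res P (Suc k)) (T_res P k) (T_diff P d \<epsilon> k)"
    using lin_map_map_lin[OF lin_map_embed_E[OF resolution_augmentation[OF P]] inj_enc_P inj_enc_E]
      lin_map_map_lin[OF lin_map_lift_R[OF resolution_differential[OF P]] inj_enc_P inj_enc_P]
    by (cases k) auto
next
  fix k assume k: "k \<le> Suc n"
  show "res_kernel T_mod (T_res P) (T_diff P d \<epsilon>) T_aug k =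
    (if k < Suc n then T_diff P d \<epsilon> k ` mcarrier (T_res P (Suc k)) else {mzero (T_res P k)})"
  proof (cases k)
    case 0
    have "T_diff P d \<epsilon> 0 ` mcarrier (T_res P 1) = enc_E ` embed_E \<epsilon> ` mcarrier (P 0)"
      using image_map_lin[OF inj_enc_P, of "lift_R (P 0)" enc_E "embed_E \<epsilon>"] by simp
    then show ?thesis
      using 0 res_kernel_T_res_0 resolution_augmentation_onto[OF P] by (simp add: image_embed_E)
  next
    case (Suc i)
    have "T_diff P d \<epsilon> (Suc i) ` mcarrier (T_res P (Suc (Suc i))) = enc_P ` d i ` mcarrier (P (Suc i))"
      using image_map_lin[OF inj_enc_P, of "lift_R (P (Suc i))" enc_P "d i"] by simp
    then show ?thesis
      using Suc k res_kernel_T_res_Suc resolution_exact[OF P, of i] resolution_res_kernel_top[OF P]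
      by auto
  qed
qed

lemma T_resolution_length:
  assumes minimal: "\<And>j. pdim_le R M j \<Longrightarrow> n \<le> j" and M: "mcarrier M \<noteq> {mzero M}"
    and Q: "proj_resolution Lam T_mod k Q d' e'"
  shows "Suc n \<le> k"
proof (rule ccontr)
  assume "\<not> Suc n \<le> k"
  then have "k < Suc n"
    by simp
  then obtain \<rho> where \<rho>: "lin_retraction Lam (T_res P k) (res_kernel T_mod (T_res P) (T_diff P d \<epsilon>) T_aug k) \<rho>"
    using resolution_kernel_retract[OF T_resolution Q] by blast
  show False
  proof (cases k)
    case 0
    then have "lin_retraction Lam E_mod ({\<zero>\<^bsub>R\<^esub>} \<times> mcarrier M \<times> {\<zero>\<^bsub>S\<^esub>})
                 (\<lambda>x. inv_into (mcarrier E_mod) enc_E (\<rho> (enc_E x)))"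
      using lin_retraction_pullback[OF _ inj_enc_E right_module_E_mod] \<rho> res_kernel_T_res_0 by auto
    then show False
      using no_retraction_onto_M[OF M] by blast
  next
    case (Suc i)
    then have i: "i < n"
      using \<open>\<not> Suc n \<le> k\<close> by simp
    have rmP: "right_module R (P i)"
      using resolution_right_module[OF P] i by simp
    have "lin_retraction Lam (map_rmod enc_P (lift_R (P i))) (enc_P ` res_kernel M P d \<epsilon> i) \<rho>"
      using \<rho> Suc res_kernel_T_res_Suc[of i] i by simp
    then have "lin_retraction Lam (lift_R (P i)) (res_kernel M P d \<epsilon> i)
                 (\<lambda>x. inv_into (mcarrier (P i)) enc_P (\<rho> (enc_P x)))"
      using lin_retraction_pullback[OF _ inj_enc_P right_module_lift_R[OF rmP]]
        res_kernel_subset[of M P d \<epsilon> i] by simp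
    then have "proj_resolution R M i (P(i := (P i)\<lparr>mcarrier := compl_proj (P i)
                 (\<lambda>x. inv_into (mcarrier (P i)) enc_P (\<rho> (enc_P x))) ` mcarrier (P i)\<rparr>)) d \<epsilon>"
      by (intro resolution_shorten[OF P i] lin_retraction_lift_R rmP)
    then have "pdim_le R M i"
      unfolding pdim_le_iff by blast
    then show False
      using minimal i by fastforce
  qed
qed

end

end

theorem proposition2p3:
  fixes R :: "('r, 'a) ring_scheme" and S :: "('s, 'b) ring_scheme"
    and M :: "('r, 'm) rmod" and L :: "'s \<Rightarrow> 'm \<Rightarrow> 'm"
  assumes "ring R" and "ring S" and "bimodule S R M L"
    and "mcarrier M \<noteq> {mzero M}"
    and "pdim R M < \<infinity>"
  shows "pdim R M + 1 \<le> fpdim (tri_ring R S M L)"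
proof -
  interpret triangular R S M L
    using assms(1-3) by (rule triangular.intro)
  obtain n where pdim_M: "pdim R M = enat n" and "pdim_le R M n"
    and minimal: "\<And>k. pdim_le R M k \<Longrightarrow> n \<le> k"
    using pdim_finiteE[OF assms(5)] by blast
  then obtain P :: "nat \<Rightarrow> ('r, 'm \<times> 'r \<times> nat \<Rightarrow> 'r) rmod" and d \<epsilon>
    where P: "proj_resolution R M n P d \<epsilon>"
    unfolding pdim_le_iff by blast
  have pdim_T: "pdim Lam T_mod = enat (Suc n)"
  proof (rule pdim_eq_enatI)
    show "pdim_le Lam T_mod (Suc n)"
      unfolding pdim_le_iff using T_resolution[OF P] by blast
    show "Suc n \<le> k" if "pdim_le Lam T_mod k" for k
      using that T_resolution_length[OF P minimal assms(4)] unfolding pdim_le_iff by blast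
  qed
  then have "pdim Lam T_mod \<le> fpdim Lam"
    using pdim_le_fpdim[OF fin_gen_T_mod] by simp
  then show ?thesis
    using pdim_T pdim_M by (simp add: one_enat_def)
qed

end
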